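(* Let $\alpha=(\{D_t\},\{\alpha_t\})$ be a partial action of a discrete group $\Gamma$ on a locally compact Hausdorff space $X$ with every $D_t$ compact (and open), let $\mathcal G=X\rtimes\Gamma$ with a quasi-invariant probability measure of full support, $A=C_0(X)$, and let $T:C_r^*(\mathcal G)\to C_r^*(\mathcal G)$ be a bounded $A$-linear operator. Define $\varphi_T(x,t)=E(\chi_t^**T\chi_t)(x)$ for $(x,t)\in\mathcal G$. Then: (i) $\varphi_T\in C_b(\mathcal G)$ and $\|\varphi_T\|_\infty\le\|T\|$; (ii) if $T$ has finite $A$-rank and takes values in $\mathrm{span}_A\{\chi_t:t\in\Gamma\}$, then $\varphi_T\in C_c(\mathcal G)$ and $\|\varphi_T\|_{M_0A(\mathcal G)}\le\|T\|_{cb}$.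
   Context: A partial action: open $D_t\subseteq X$, homeomorphisms $\alpha_t:D_{t^{-1}}\to D_t$, $D_1=X$, $\alpha_1=\mathrm{id}$, $\alpha_s\circ\alpha_t\subseteq\alpha_{st}$. The groupoid $\mathcal G=X\rtimes\Gamma=\bigsqcup_t D_t\times\{t\}$ has $d(x,t)=x$, $r(x,t)=\alpha_t(x)$, product $(\alpha_t(x),s)(x,t)=(x,st)$, topology from $X\times\Gamma$; it is étale with unit space $X$. $\chi_t$ is the indicator function of $D_t\times\{t\}$, an element of $C_c(\mathcal G)\subseteq C_r^*(\mathcal G)$ (reduced groupoid $C^*$-algebra with convolution and involution $f^*(\gamma)=\overline{f(\gamma^{-1})}$). $A=C_0(X)$ acts on the right by $f*a(\gamma)=f(\gamma)a(d(\gamma))$; $E:C_r^*(\mathcal G)\to C_0(X)$ is the conditional expectation extending restriction to $X$; $\langle f,g\rangle_A=E(f^**g)$; $\mathrm{span}_A\{\chi_t\}$ means finite sums $\sum_j\chi_{t_j}*a_j$ with $a_j\in A$. An $A$-linear map has $A$-rank one if it is $f\mapsto h*\langle g,f\rangle_A$ and finite $A$-rank if a finite sum of such. $\|\varphi\|_{M_0A(\mathcal G)}$ is the cb norm of pointwise multiplication by $\varphi$ on Renault's Fourier algebra $A(\mathcal G)$ (equivalently, for continuous bounded $\varphi$, of pointwise multiplication on $C_r^*(\mathcal G)$). *)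

theory Defs
  imports "HOL-Analysis.Analysis" "HOL-Probability.Probability"
begin

text \<open>
  The space X is the whole (nonempty) type 'a with its topology.
  The discrete group \<Gamma> is the type 'g of class group_add, written additively:
  the product st is s + t, the inverse t^-1 is -t, the unit is 0 (the group need
  not be commutative).  A partial action is given by D :: 'g => 'a set and
  al :: 'g => 'a => 'a, where al t is a homeomorphism from D(-t) onto D t.
  The transformation groupoid is G = {(x,t). x in D(-t)} with d(x,t) = x,
  r(x,t) = al t x, (al t x, s)(x,t) = (x, s + t), (x,t)^-1 = (al t x, -t),
  and unit space identified with {(x,0)}.
\<close>

definition partial_action :: "('g::group_add \<Rightarrow> 'a::topological_space set) \<Rightarrow> ('g \<Rightarrow> 'a \<Rightarrow> 'a) \<Rightarrow> bool" where
  "partial_action D al \<longleftrightarrow>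
     (\<forall>t. open (D t)) \<and> D 0 = UNIV \<and> (\<forall>x. al 0 x = x) \<and>
     (\<forall>t. \<exists>g. homeomorphism (D (- t)) (D t) (al t) g) \<and>
     (\<forall>s t x. x \<in> D (- t) \<and> al t x \<in> D (- s) \<longrightarrow>
         x \<in> D (- (s + t)) \<and> al s (al t x) = al (s + t) x)"

definition grpd :: "('g::group_add \<Rightarrow> 'a set) \<Rightarrow> ('a \<times> 'g) set" where
  "grpd D = {(x, t). x \<in> D (- t)}"

definition fibre :: "('g::group_add \<Rightarrow> 'a set) \<Rightarrow> 'a \<Rightarrow> ('a \<times> 'g) set" where
  "fibre D x = {(y, t). y = x \<and> x \<in> D (- t)}"

definition gmul :: "('a \<times> 'g::group_add) \<Rightarrow> ('a \<times> 'g) \<Rightarrow> ('a \<times> 'g)" where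
  "gmul \<gamma> \<eta> = (fst \<eta>, snd \<gamma> + snd \<eta>)"

definition ginv :: "('g::group_add \<Rightarrow> 'a \<Rightarrow> 'a) \<Rightarrow> ('a \<times> 'g) \<Rightarrow> ('a \<times> 'g)" where
  "ginv al \<gamma> = (al (snd \<gamma>) (fst \<gamma>), - snd \<gamma>)"

definition chi :: "('g::group_add \<Rightarrow> 'a set) \<Rightarrow> 'g \<Rightarrow> ('a \<times> 'g) \<Rightarrow> complex" where
  "chi D t = (\<lambda>(x, s). if s = t \<and> x \<in> D (- t) then 1 else 0)"

definition C0 :: "('a::topological_space \<Rightarrow> complex) \<Rightarrow> bool" where
  "C0 a \<longleftrightarrow> continuous_on UNIV a \<and>
     (\<forall>e>0. \<exists>K. compact K \<and> (\<forall>x. x \<notin> K \<longrightarrow> cmod (a x) < e))"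

text \<open>continuity on G (topology of G as subspace of X x discrete \<Gamma>), slice by slice\<close>
definition cont_G :: "('g::group_add \<Rightarrow> 'a::topological_space set) \<Rightarrow> ('a \<times> 'g \<Rightarrow> complex) \<Rightarrow> bool" where
  "cont_G D f \<longleftrightarrow> (\<forall>t. continuous_on (D (- t)) (\<lambda>x. f (x, t)))"

definition Cc :: "('g::group_add \<Rightarrow> 'a::topological_space set) \<Rightarrow> ('a \<times> 'g \<Rightarrow> complex) \<Rightarrow> bool" where
  "Cc D f \<longleftrightarrow> (\<forall>\<gamma>. \<gamma> \<notin> grpd D \<longrightarrow> f \<gamma> = 0) \<and> cont_G D f \<and>
     (\<exists>F K. finite F \<and> (\<forall>t\<in>F. compact (K t) \<and> K t \<subseteq> D (- t)) \<and>
        (\<forall>x t. f (x, t) \<noteq> 0 \<longrightarrow> t \<in> F \<and> x \<in> K t))"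

definition Cb :: "('g::group_add \<Rightarrow> 'a::topological_space set) \<Rightarrow> ('a \<times> 'g \<Rightarrow> complex) \<Rightarrow> bool" where
  "Cb D f \<longleftrightarrow> (\<forall>\<gamma>. \<gamma> \<notin> grpd D \<longrightarrow> f \<gamma> = 0) \<and> cont_G D f \<and>
     (\<exists>B. \<forall>\<gamma>. cmod (f \<gamma>) \<le> B)"

definition unit_vecs :: "('g::group_add \<Rightarrow> 'a set) \<Rightarrow> nat \<Rightarrow> 'a \<Rightarrow> (nat \<Rightarrow> 'a \<times> 'g \<Rightarrow> complex) set" where
  "unit_vecs D n x = {\<xi>. finite {(i, \<gamma>). \<xi> i \<gamma> \<noteq> 0} \<and>
      (\<forall>i \<gamma>. \<xi> i \<gamma> \<noteq> 0 \<longrightarrow> i < n \<and> \<gamma> \<in> fibre D x) \<and>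
      (\<Sum>(i, \<gamma>)\<in>{(i, \<gamma>). \<xi> i \<gamma> \<noteq> 0}. (cmod (\<xi> i \<gamma>))\<^sup>2) \<le> 1}"

text \<open>matrix coefficient <(lambda_x^(n) F) xi, zeta> of the n-fold amplification of the
  regular representation lambda_x on l^2(G_x), (lambda_x(f) xi)(g) = sum_{h in G_x} f(g h^-1) xi(h)\<close>
definition coeff :: "('g::group_add \<Rightarrow> 'a \<Rightarrow> 'a) \<Rightarrow> (nat \<Rightarrow> nat \<Rightarrow> 'a \<times> 'g \<Rightarrow> complex) \<Rightarrow>
    (nat \<Rightarrow> 'a \<times> 'g \<Rightarrow> complex) \<Rightarrow> (nat \<Rightarrow> 'a \<times> 'g \<Rightarrow> complex) \<Rightarrow> complex" where
  "coeff al F \<xi> \<zeta> =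
     (\<Sum>(i, \<gamma>)\<in>{(i, \<gamma>). \<zeta> i \<gamma> \<noteq> 0}. \<Sum>(j, \<eta>)\<in>{(j, \<eta>). \<xi> j \<eta> \<noteq> 0}.
        F i j (gmul \<gamma> (ginv al \<eta>)) * \<xi> j \<eta> * cnj (\<zeta> i \<gamma>))"

text \<open>norm in M_n(C_r^*(G)) (sup over x of the amplified regular representations), in [0,\<infinity>]\<close>
definition matnorm :: "('g::group_add \<Rightarrow> 'a set) \<Rightarrow> ('g \<Rightarrow> 'a \<Rightarrow> 'a) \<Rightarrow> nat \<Rightarrow>
    (nat \<Rightarrow> nat \<Rightarrow> 'a \<times> 'g \<Rightarrow> complex) \<Rightarrow> ennreal" where
  "matnorm D al n F = (SUP x. SUP \<xi>\<in>unit_vecs D n x. SUP \<zeta>\<in>unit_vecs D n x.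
       ennreal (cmod (coeff al F \<xi> \<zeta>)))"

definition rnorm :: "('g::group_add \<Rightarrow> 'a set) \<Rightarrow> ('g \<Rightarrow> 'a \<Rightarrow> 'a) \<Rightarrow> ('a \<times> 'g \<Rightarrow> complex) \<Rightarrow> real" where
  "rnorm D al f = enn2real (matnorm D al 1 (\<lambda>_ _. f))"

text \<open>C_r^*(G), realised (via the injective map j) as functions on G: the
  reduced-norm limits of elements of C_c(G).\<close>
definition Cr :: "('g::group_add \<Rightarrow> 'a::topological_space set) \<Rightarrow> ('g \<Rightarrow> 'a \<Rightarrow> 'a) \<Rightarrow> ('a \<times> 'g \<Rightarrow> complex) set" where
  "Cr D al = {f. (\<forall>\<gamma>. \<gamma> \<notin> grpd D \<longrightarrow> f \<gamma> = 0) \<and>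
      (\<forall>e>0. \<exists>g. Cc D g \<and> matnorm D al 1 (\<lambda>_ _. (\<lambda>\<gamma>. f \<gamma> - g \<gamma>)) \<le> ennreal e)}"

definition conv :: "('g::group_add \<Rightarrow> 'a set) \<Rightarrow> ('g \<Rightarrow> 'a \<Rightarrow> 'a) \<Rightarrow> ('a \<times> 'g \<Rightarrow> complex) \<Rightarrow>
    ('a \<times> 'g \<Rightarrow> complex) \<Rightarrow> ('a \<times> 'g \<Rightarrow> complex)" where
  "conv D al f g = (\<lambda>\<gamma>. infsum (\<lambda>\<eta>. f (gmul \<gamma> (ginv al \<eta>)) * g \<eta>) (fibre D (fst \<gamma>)))"

definition star :: "('g::group_add \<Rightarrow> 'a \<Rightarrow> 'a) \<Rightarrow> ('a \<times> 'g \<Rightarrow> complex) \<Rightarrow> ('a \<times> 'g \<Rightarrow> complex)" where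
  "star al f = (\<lambda>\<gamma>. cnj (f (ginv al \<gamma>)))"

definition ract :: "('a \<times> 'g \<Rightarrow> complex) \<Rightarrow> ('a \<Rightarrow> complex) \<Rightarrow> ('a \<times> 'g \<Rightarrow> complex)" where
  "ract f a = (\<lambda>\<gamma>. f \<gamma> * a (fst \<gamma>))"

definition Econd :: "('a \<times> 'g::group_add \<Rightarrow> complex) \<Rightarrow> ('a \<Rightarrow> complex)" where
  "Econd f = (\<lambda>x. f (x, 0))"

definition Ainner :: "('g::group_add \<Rightarrow> 'a set) \<Rightarrow> ('g \<Rightarrow> 'a \<Rightarrow> 'a) \<Rightarrow> ('a \<times> 'g \<Rightarrow> complex) \<Rightarrow>
    ('a \<times> 'g \<Rightarrow> complex) \<Rightarrow> ('a \<Rightarrow> complex)" where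
  "Ainner D al f g = Econd (conv D al (star al f) g)"

definition bounded_Alinear :: "('g::group_add \<Rightarrow> 'a::topological_space set) \<Rightarrow> ('g \<Rightarrow> 'a \<Rightarrow> 'a) \<Rightarrow>
    (('a \<times> 'g \<Rightarrow> complex) \<Rightarrow> ('a \<times> 'g \<Rightarrow> complex)) \<Rightarrow> bool" where
  "bounded_Alinear D al T \<longleftrightarrow>
     (\<forall>f\<in>Cr D al. T f \<in> Cr D al) \<and>
     (\<forall>f\<in>Cr D al. \<forall>g\<in>Cr D al. T (\<lambda>\<gamma>. f \<gamma> + g \<gamma>) = (\<lambda>\<gamma>. T f \<gamma> + T g \<gamma>)) \<and>
     (\<forall>f\<in>Cr D al. \<forall>c. T (\<lambda>\<gamma>. c * f \<gamma>) = (\<lambda>\<gamma>. c * T f \<gamma>)) \<and>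
     (\<forall>f\<in>Cr D al. \<forall>a. C0 a \<longrightarrow> T (ract f a) = ract (T f) a) \<and>
     (\<exists>C. \<forall>f\<in>Cr D al. rnorm D al (T f) \<le> C * rnorm D al f)"

definition opnorm :: "('g::group_add \<Rightarrow> 'a::topological_space set) \<Rightarrow> ('g \<Rightarrow> 'a \<Rightarrow> 'a) \<Rightarrow>
    (('a \<times> 'g \<Rightarrow> complex) \<Rightarrow> ('a \<times> 'g \<Rightarrow> complex)) \<Rightarrow> real" where
  "opnorm D al T = Sup {rnorm D al (T f) | f. f \<in> Cr D al \<and> rnorm D al f \<le> 1}"

definition cbnorm :: "('g::group_add \<Rightarrow> 'a::topological_space set) \<Rightarrow> ('g \<Rightarrow> 'a \<Rightarrow> 'a) \<Rightarrow>
    (('a \<times> 'g \<Rightarrow> complex) \<Rightarrow> ('a \<times> 'g \<Rightarrow> complex)) \<Rightarrow> ennreal" where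
  "cbnorm D al T = (SUP n. SUP F\<in>{F. (\<forall>i<n. \<forall>j<n. F i j \<in> Cr D al) \<and> matnorm D al n F \<le> 1}.
       matnorm D al n (\<lambda>i j. T (F i j)))"

definition M0A_norm :: "('g::group_add \<Rightarrow> 'a::topological_space set) \<Rightarrow> ('g \<Rightarrow> 'a \<Rightarrow> 'a) \<Rightarrow>
    ('a \<times> 'g \<Rightarrow> complex) \<Rightarrow> ennreal" where
  "M0A_norm D al \<phi> = cbnorm D al (\<lambda>f \<gamma>. \<phi> \<gamma> * f \<gamma>)"

definition finite_Arank :: "('g::group_add \<Rightarrow> 'a::topological_space set) \<Rightarrow> ('g \<Rightarrow> 'a \<Rightarrow> 'a) \<Rightarrow>
    (('a \<times> 'g \<Rightarrow> complex) \<Rightarrow> ('a \<times> 'g \<Rightarrow> complex)) \<Rightarrow> bool" where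
  "finite_Arank D al T \<longleftrightarrow> (\<exists>(n::nat) h g. (\<forall>i<n. h i \<in> Cr D al \<and> g i \<in> Cr D al) \<and>
      (\<forall>f\<in>Cr D al. T f = (\<lambda>\<gamma>. \<Sum>i<n. ract (h i) (Ainner D al (g i) f) \<gamma>)))"

definition in_span_A_chi :: "('g::group_add \<Rightarrow> 'a::topological_space set) \<Rightarrow> ('a \<times> 'g \<Rightarrow> complex) \<Rightarrow> bool" where
  "in_span_A_chi D f \<longleftrightarrow> (\<exists>F a. finite F \<and> (\<forall>t\<in>F. C0 (a t)) \<and>
      f = (\<lambda>\<gamma>. \<Sum>t\<in>F. ract (chi D t) (a t) \<gamma>))"

definition phiT :: "('g::group_add \<Rightarrow> 'a::topological_space set) \<Rightarrow> ('g \<Rightarrow> 'a \<Rightarrow> 'a) \<Rightarrow>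
    (('a \<times> 'g \<Rightarrow> complex) \<Rightarrow> ('a \<times> 'g \<Rightarrow> complex)) \<Rightarrow> ('a \<times> 'g \<Rightarrow> complex)" where
  "phiT D al T = (\<lambda>(x, t). if (x, t) \<in> grpd D
      then Econd (conv D al (star al (chi D t)) (T (chi D t))) x else 0)"

definition qi_full_prob :: "('g::group_add \<Rightarrow> 'a::topological_space set) \<Rightarrow> ('g \<Rightarrow> 'a \<Rightarrow> 'a) \<Rightarrow> 'a measure \<Rightarrow> bool" where
  "qi_full_prob D al \<mu> \<longleftrightarrow> prob_space \<mu> \<and> sets \<mu> = sets borel \<and>
     (\<forall>U. open U \<and> U \<noteq> {} \<longrightarrow> emeasure \<mu> U > 0) \<and>
     (\<forall>t E. E \<in> sets borel \<and> E \<subseteq> D (- t) \<longrightarrow>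
        (emeasure \<mu> (al t ` E) = 0 \<longleftrightarrow> emeasure \<mu> E = 0))"

end

theory Submission
  imports Defs
begin

(*
  Since E(chi_t^* f)(x) = f(x,t), the symbol phi_T(x,t) is the value of T chi_t at (x,t). Point
  evaluation is bounded by the reduced norm (test the regular representation against point masses),
  so reduced-norm limits of C_c(G) are uniform limits on every slice; this gives (i).

  For (ii), write T f (x,t) = sum_i h_i(x,t) <g_i, f>_A(x). Off the finitely many slices that carry
  some T g_k, the vector sum_i h_i(x,t) cnj(g_i) on the fibre over x is orthogonal to itself, and
  phi_T(x,t) is its value at (x,t); so phi_T has compact support. For the cb bound, A-linearity gives
  T(chi_s a) = phi_T chi_s a. Cutting the entries of a matrix F into slices and re-indexing rows and
  columns by pairs (row, slice label) yields a matrix of no larger norm on which T acts as the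
  Schur multiplier phi_T.

  Compactness of the D_t enters because X = D_0 is then compact, so that the slices of elements of
  C_r^*(G) lie in A.
*)

section \<open>Partial actions\<close>

lemma partial_action_dom_zero: "partial_action D al \<Longrightarrow> D 0 = UNIV"
  by (simp add: partial_action_def)

lemma partial_action_act_zero: "partial_action D al \<Longrightarrow> al 0 x = x"
  by (simp add: partial_action_def)

lemma partial_action_open: "partial_action D al \<Longrightarrow> open (D t)"
  by (simp add: partial_action_def)

lemma partial_action_mapsto:
  assumes "partial_action D al" "x \<in> D (- t)"
  shows "al t x \<in> D t"
proof -
  obtain g where "homeomorphism (D (- t)) (D t) (al t) g"
    using assms(1) unfolding partial_action_def by blast
  then show ?thesis using assms(2) unfolding homeomorphism_def by blast
qed

lemma partial_action_comp:
  assumes "partial_action D al" "x \<in> D (- t)" "al t x \<in> D (- s)"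
  shows "x \<in> D (- (s + t)) \<and> al s (al t x) = al (s + t) x"
  using assms unfolding partial_action_def by blast

lemma partial_action_inverse:
  assumes "partial_action D al" "x \<in> D (- t)"
  shows "al (- t) (al t x) = x"
proof -
  have "al t x \<in> D (- (- t))" using partial_action_mapsto[OF assms] by simp
  from partial_action_comp[OF assms this] show ?thesis
    using partial_action_act_zero[OF assms(1)] by simp
qed

lemma partial_action_mem_dom_diff:
  assumes pa: "partial_action D al" and "x \<in> D (- u)" and v: "x \<in> D (- v)"
  shows "al v x \<in> D (- (u + - v))"
proof -
  have "al v x \<in> D (- (- v))" using partial_action_mapsto[OF pa v] by simp
  moreover have "al (- v) (al v x) \<in> D (- u)"
    using partial_action_inverse[OF pa v] assms(2) by simp
  ultimately show ?thesis using partial_action_comp[OF pa] by fastforce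
qed

lemma mem_grpd_iff: "(x, t) \<in> grpd D \<longleftrightarrow> x \<in> D (- t)"
  by (simp add: grpd_def)

lemma gmul_ginv_Pair: "gmul (y, u) (ginv al (y, v)) = (al v y, u + - v)"
  by (simp add: gmul_def ginv_def)

lemma minus_add_eq_iff: "- (l::'g::group_add) + v = k \<longleftrightarrow> v = l + k"
  by (auto simp: add.assoc[symmetric])

lemma add_minus_eq_iff: "(a::'g::group_add) + - b = t \<longleftrightarrow> a = t + b"
  by (auto simp: add.assoc)

lemma add_minus_eq_add_minus_iff: "(u::'g::group_add) + - v = a + - b \<longleftrightarrow> - a + u = - b + v"
  by (simp only: minus_add_eq_iff add_minus_eq_iff add.assoc)

section \<open>Finitely supported vectors and matrix coefficients\<close>

definition supp :: "(nat \<Rightarrow> 'b \<Rightarrow> complex) \<Rightarrow> (nat \<times> 'b) set" where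
  "supp \<xi> = {(i, \<gamma>). \<xi> i \<gamma> \<noteq> 0}"

definition sqnorm :: "(nat \<Rightarrow> 'b \<Rightarrow> complex) \<Rightarrow> real" where
  "sqnorm \<xi> = (\<Sum>(i, \<gamma>)\<in>supp \<xi>. (cmod (\<xi> i \<gamma>))\<^sup>2)"

lemma unit_vecs_iff: "\<xi> \<in> unit_vecs D n x \<longleftrightarrow> finite (supp \<xi>) \<and>
   (\<forall>i \<gamma>. \<xi> i \<gamma> \<noteq> 0 \<longrightarrow> i < n \<and> \<gamma> \<in> fibre D x) \<and> sqnorm \<xi> \<le> 1"
  by (simp add: unit_vecs_def supp_def sqnorm_def)

lemma supp_unit_vecs:
  assumes "w \<in> unit_vecs D m y" "p \<in> supp w"
  shows "fst p < m \<and> snd p \<in> fibre D y"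
proof -
  have "w (fst p) (snd p) \<noteq> 0" using assms(2) by (simp add: supp_def split_def)
  then show ?thesis using assms(1) unfolding unit_vecs_iff by blast
qed

lemma sqnorm_nonneg: "sqnorm \<xi> \<ge> 0"
  unfolding sqnorm_def by (auto intro: sum_nonneg)

lemma sqnorm_eq_sum_superset:
  assumes "finite A" "supp \<xi> \<subseteq> A"
  shows "sqnorm \<xi> = (\<Sum>(i, \<gamma>)\<in>A. (cmod (\<xi> i \<gamma>))\<^sup>2)"
  unfolding sqnorm_def using assms by (intro sum.mono_neutral_left) (auto simp: supp_def)

lemma supp_empty_if_sqnorm_eq_0:
  assumes "finite (supp \<xi>)" "sqnorm \<xi> = 0"
  shows "supp \<xi> = {}"
proof -
  have "\<forall>p\<in>supp \<xi>. (\<lambda>(i,\<gamma>). (cmod (\<xi> i \<gamma>))\<^sup>2) p = 0"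
    using assms unfolding sqnorm_def by (subst sum_nonneg_eq_0_iff[symmetric]) auto
  then show ?thesis by (auto simp: supp_def)
qed

lemma coeff_eq_sum_supp: "coeff al F \<xi> \<zeta> = (\<Sum>(i, \<gamma>)\<in>supp \<zeta>. \<Sum>(j, \<eta>)\<in>supp \<xi>.
    F i j (gmul \<gamma> (ginv al \<eta>)) * \<xi> j \<eta> * cnj (\<zeta> i \<gamma>))"
  by (simp add: coeff_def supp_def)

lemma coeff_eq_sum_superset:
  assumes "finite A" "supp \<zeta> \<subseteq> A" "finite B" "supp \<xi> \<subseteq> B"
  shows "coeff al F \<xi> \<zeta> = (\<Sum>(i, \<gamma>)\<in>A. \<Sum>(j, \<eta>)\<in>B.
    F i j (gmul \<gamma> (ginv al \<eta>)) * \<xi> j \<eta> * cnj (\<zeta> i \<gamma>))"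
proof -
  have "coeff al F \<xi> \<zeta> = (\<Sum>(i, \<gamma>)\<in>supp \<zeta>. \<Sum>(j, \<eta>)\<in>B.
      F i j (gmul \<gamma> (ginv al \<eta>)) * \<xi> j \<eta> * cnj (\<zeta> i \<gamma>))"
    unfolding coeff_eq_sum_supp using assms
    by (intro sum.cong[OF refl]) (auto intro!: sum.mono_neutral_left simp: supp_def)
  also have "\<dots> = (\<Sum>(i, \<gamma>)\<in>A. \<Sum>(j, \<eta>)\<in>B.
      F i j (gmul \<gamma> (ginv al \<eta>)) * \<xi> j \<eta> * cnj (\<zeta> i \<gamma>))"
    using assms by (intro sum.mono_neutral_left) (auto simp: supp_def)
  finally show ?thesis .
qed

lemma coeff_zero: "coeff al (\<lambda>i j \<gamma>. 0) \<xi> \<zeta> = 0"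
  by (simp add: coeff_eq_sum_supp)

lemma coeff_eq_0_if_supp_empty: "supp \<xi> = {} \<or> supp \<zeta> = {} \<Longrightarrow> coeff al F \<xi> \<zeta> = 0"
  by (auto simp: coeff_eq_sum_supp)

lemma coeff_add:
  "coeff al (\<lambda>i j \<gamma>. F i j \<gamma> + G i j \<gamma>) \<xi> \<zeta> = coeff al F \<xi> \<zeta> + coeff al G \<xi> \<zeta>"
  by (simp add: coeff_eq_sum_supp split_def distrib_right sum.distrib)

lemma coeff_scale:
  assumes "a \<noteq> 0" "b \<noteq> 0"
  shows "coeff al F (\<lambda>i \<gamma>. \<xi> i \<gamma> / a) (\<lambda>i \<gamma>. \<zeta> i \<gamma> / of_real b) =
    coeff al F \<xi> \<zeta> / (a * of_real b)"
proof -
  have "supp (\<lambda>i \<gamma>. \<xi> i \<gamma> / a) = supp \<xi>" "supp (\<lambda>i \<gamma>. \<zeta> i \<gamma> / of_real b) = supp \<zeta>"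
    using assms by (auto simp: supp_def)
  then show ?thesis
    by (simp add: coeff_eq_sum_supp split_def sum_divide_distrib field_simps)
qed

lemma coeff_le_matnorm:
  "\<xi> \<in> unit_vecs D n y \<Longrightarrow> \<zeta> \<in> unit_vecs D n y \<Longrightarrow>
   ennreal (cmod (coeff al F \<xi> \<zeta>)) \<le> matnorm D al n F"
  unfolding matnorm_def
  by (rule SUP_upper2[OF UNIV_I], rule SUP_upper2, assumption, rule SUP_upper, assumption)

lemma matnorm_leI:
  assumes "\<And>y \<xi> \<zeta>. \<xi> \<in> unit_vecs D n y \<Longrightarrow> \<zeta> \<in> unit_vecs D n y \<Longrightarrow>
     cmod (coeff al F \<xi> \<zeta>) \<le> B"
  shows "matnorm D al n F \<le> ennreal B"
  unfolding matnorm_def by (intro SUP_least) (simp add: assms ennreal_leI)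

lemma matnorm_zero: "matnorm D al n (\<lambda>i j \<gamma>. 0) = 0"
  using matnorm_leI[of D n al "\<lambda>i j \<gamma>. 0" 0] by (simp add: coeff_zero)

lemma matnorm_add_le:
  "matnorm D al n (\<lambda>i j \<gamma>. F i j \<gamma> + G i j \<gamma>) \<le> matnorm D al n F + matnorm D al n G"
  unfolding matnorm_def[of D al n "\<lambda>i j \<gamma>. F i j \<gamma> + G i j \<gamma>"]
proof (intro SUP_least)
  fix y \<xi> \<zeta> assume \<xi>: "\<xi> \<in> unit_vecs D n y" and \<zeta>: "\<zeta> \<in> unit_vecs D n y"
  have "ennreal (cmod (coeff al (\<lambda>i j \<gamma>. F i j \<gamma> + G i j \<gamma>) \<xi> \<zeta>))
      \<le> ennreal (cmod (coeff al F \<xi> \<zeta>)) + ennreal (cmod (coeff al G \<xi> \<zeta>))"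
    by (simp add: coeff_add ennreal_leI norm_triangle_ineq del: ennreal_plus flip: ennreal_plus)
  also have "\<dots> \<le> matnorm D al n F + matnorm D al n G"
    by (intro add_mono coeff_le_matnorm[OF \<xi> \<zeta>])
  finally show "ennreal (cmod (coeff al (\<lambda>i j \<gamma>. F i j \<gamma> + G i j \<gamma>) \<xi> \<zeta>))
      \<le> matnorm D al n F + matnorm D al n G" .
qed

lemma matnorm_sum_le:
  "finite A \<Longrightarrow> matnorm D al n (\<lambda>i j \<gamma>. \<Sum>t\<in>A. F t i j \<gamma>) \<le> (\<Sum>t\<in>A. matnorm D al n (F t))"
proof (induction A rule: finite_induct)
  case empty
  then show ?case by (simp add: matnorm_zero)
next
  case (insert t A)
  then show ?case
    using matnorm_add_le[of D al n "F t" "\<lambda>i j \<gamma>. \<Sum>t\<in>A. F t i j \<gamma>"]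
    by (simp add: order_trans[OF _ add_left_mono])
qed

lemma le_enn2real_if_ennreal_le: "ennreal c \<le> M \<Longrightarrow> M < \<top> \<Longrightarrow> 0 \<le> c \<Longrightarrow> c \<le> enn2real M"
  using enn2real_mono[of "ennreal c" M] by simp

lemma norm_coeff_le_matnorm_sqnorm:
  assumes fin: "finite (supp \<xi>)" "finite (supp \<zeta>)"
    and sub: "\<forall>i \<gamma>. \<xi> i \<gamma> \<noteq> 0 \<longrightarrow> i < n \<and> \<gamma> \<in> fibre D y"
      "\<forall>i \<gamma>. \<zeta> i \<gamma> \<noteq> 0 \<longrightarrow> i < n \<and> \<gamma> \<in> fibre D y"
    and M: "matnorm D al n F < \<top>"
  shows "cmod (coeff al F \<xi> \<zeta>) \<le> enn2real (matnorm D al n F) * sqrt (sqnorm \<xi>) * sqrt (sqnorm \<zeta>)"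
proof (cases "sqnorm \<xi> = 0 \<or> sqnorm \<zeta> = 0")
  case True
  then have "coeff al F \<xi> \<zeta> = 0"
    using supp_empty_if_sqnorm_eq_0 fin coeff_eq_0_if_supp_empty by blast
  then show ?thesis by (simp add: sqnorm_nonneg)
next
  case False
  define a b where "a = sqrt (sqnorm \<xi>)" and "b = sqrt (sqnorm \<zeta>)"
  have a: "a > 0" and b: "b > 0"
    using False sqnorm_nonneg[of \<xi>] sqnorm_nonneg[of \<zeta>] by (auto simp: a_def b_def)
  define \<xi>1 \<zeta>1 where "\<xi>1 = (\<lambda>i \<gamma>. \<xi> i \<gamma> / of_real a)" and "\<zeta>1 = (\<lambda>i \<gamma>. \<zeta> i \<gamma> / of_real b)"
  have supp1: "supp \<xi>1 = supp \<xi>" "supp \<zeta>1 = supp \<zeta>"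
    using a b by (auto simp: supp_def \<xi>1_def \<zeta>1_def)
  have "sqnorm \<xi>1 = sqnorm \<xi> / a\<^sup>2" "sqnorm \<zeta>1 = sqnorm \<zeta> / b\<^sup>2"
    unfolding sqnorm_def supp1
    by (simp_all add: \<xi>1_def \<zeta>1_def sum_divide_distrib split_def norm_divide power_divide)
  then have "sqnorm \<xi>1 = 1" "sqnorm \<zeta>1 = 1"
    using a b False sqnorm_nonneg[of \<xi>] sqnorm_nonneg[of \<zeta>] by (simp_all add: a_def b_def)
  then have "\<xi>1 \<in> unit_vecs D n y" "\<zeta>1 \<in> unit_vecs D n y"
    unfolding unit_vecs_iff supp1 using fin sub a b by (auto simp: \<xi>1_def \<zeta>1_def)
  then have "ennreal (cmod (coeff al F \<xi>1 \<zeta>1)) \<le> matnorm D al n F"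
    by (rule coeff_le_matnorm)
  then have le: "cmod (coeff al F \<xi>1 \<zeta>1) \<le> enn2real (matnorm D al n F)"
    using M by (intro le_enn2real_if_ennreal_le) auto
  have "coeff al F \<xi>1 \<zeta>1 = coeff al F \<xi> \<zeta> / (of_real a * of_real b)"
    unfolding \<xi>1_def \<zeta>1_def using a b by (intro coeff_scale) auto
  then have "cmod (coeff al F \<xi> \<zeta>) = a * b * cmod (coeff al F \<xi>1 \<zeta>1)"
    using a b by (simp add: norm_divide norm_mult)
  also have "\<dots> \<le> a * b * enn2real (matnorm D al n F)"
    using le a b by (intro mult_left_mono) auto
  finally show ?thesis by (simp add: a_def b_def mult_ac)
qed

lemma sum_if_le_sum_card_le_1:
  fixes a :: "'r \<Rightarrow> real"
  assumes S: "finite S" and card: "\<And>r. r \<in> R \<Longrightarrow> card {s\<in>S. P s r} \<le> 1" and a: "\<And>r. 0 \<le> a r"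
  shows "(\<Sum>s\<in>S. \<Sum>r\<in>R. if P s r then a r else 0) \<le> (\<Sum>r\<in>R. a r)"
proof -
  have "(\<Sum>s\<in>S. \<Sum>r\<in>R. if P s r then a r else 0) = (\<Sum>r\<in>R. a r * card {s\<in>S. P s r})"
    by (subst sum.swap) (simp add: sum.If_cases[OF S] S Int_def mult.commute)
  also have "\<dots> \<le> (\<Sum>r\<in>R. a r)"
    by (intro sum_mono) (use card a in \<open>auto intro!: mult_left_le\<close>)
  finally show ?thesis .
qed

lemma norm_sparse_bilinear_le:
  fixes c :: "'s \<Rightarrow> 'r \<Rightarrow> complex" and x :: "'r \<Rightarrow> complex" and y :: "'s \<Rightarrow> complex"
  assumes S: "finite S" and R: "finite R"
    and P: "\<And>s r. s \<in> S \<Longrightarrow> r \<in> R \<Longrightarrow> c s r \<noteq> 0 \<Longrightarrow> P s r"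
    and B: "\<And>s r. s \<in> S \<Longrightarrow> r \<in> R \<Longrightarrow> cmod (c s r) \<le> B" and B0: "B \<ge> 0"
    and row: "\<And>r. r \<in> R \<Longrightarrow> card {s\<in>S. P s r} \<le> 1"
    and col: "\<And>s. s \<in> S \<Longrightarrow> card {r\<in>R. P s r} \<le> 1"
  shows "cmod (\<Sum>s\<in>S. \<Sum>r\<in>R. c s r * x r * y s) \<le>
     B * ((\<Sum>r\<in>R. (cmod (x r))\<^sup>2) + (\<Sum>s\<in>S. (cmod (y s))\<^sup>2)) / 2"
proof -
  have each: "cmod (c s r * x r * y s) \<le> (if P s r then B * ((cmod (x r))\<^sup>2 + (cmod (y s))\<^sup>2) / 2 else 0)"
    if "s \<in> S" "r \<in> R" for s r
  proof (cases "P s r")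
    case True
    have "cmod (c s r * x r * y s) = cmod (c s r) * (cmod (x r) * cmod (y s))" by (simp add: norm_mult)
    also have "\<dots> \<le> B * (cmod (x r) * cmod (y s))"
      using B[OF that] by (intro mult_right_mono) auto
    also have "cmod (x r) * cmod (y s) \<le> ((cmod (x r))\<^sup>2 + (cmod (y s))\<^sup>2) / 2"
      using sum_squares_bound[of "cmod (x r)" "cmod (y s)"] by (simp add: power2_eq_square field_simps)
    then have "B * (cmod (x r) * cmod (y s)) \<le> B * (((cmod (x r))\<^sup>2 + (cmod (y s))\<^sup>2) / 2)"
      using B0 by (rule mult_left_mono)
    finally show ?thesis using True by simp
  next
    case False
    then show ?thesis using P that by fastforce
  qed
  have rows: "(\<Sum>s\<in>S. \<Sum>r\<in>R. if P s r then (cmod (x r))\<^sup>2 else 0) \<le> (\<Sum>r\<in>R. (cmod (x r))\<^sup>2)"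
    using sum_if_le_sum_card_le_1[where P = P and R = R, OF S row] by simp
  have cols: "(\<Sum>s\<in>S. \<Sum>r\<in>R. if P s r then (cmod (y s))\<^sup>2 else 0) \<le> (\<Sum>s\<in>S. (cmod (y s))\<^sup>2)"
    using sum_if_le_sum_card_le_1[where P = "\<lambda>r s. P s r" and S = R and R = S, OF R col]
    by (subst sum.swap) simp
  have "cmod (\<Sum>s\<in>S. \<Sum>r\<in>R. c s r * x r * y s) \<le> (\<Sum>s\<in>S. \<Sum>r\<in>R. cmod (c s r * x r * y s))"
    by (rule order_trans[OF norm_sum sum_mono[OF norm_sum]])
  also have "\<dots> \<le> (\<Sum>s\<in>S. \<Sum>r\<in>R. (if P s r then B * ((cmod (x r))\<^sup>2 + (cmod (y s))\<^sup>2) / 2 else 0))"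
    by (intro sum_mono each)
  also have "\<dots> = B / 2 * ((\<Sum>s\<in>S. \<Sum>r\<in>R. (if P s r then (cmod (x r))\<^sup>2 else 0)) +
                 (\<Sum>s\<in>S. \<Sum>r\<in>R. (if P s r then (cmod (y s))\<^sup>2 else 0)))"
    by (simp add: sum_distrib_left sum.distrib[symmetric] if_distrib field_simps cong: if_cong)
  also have "\<dots> \<le> B / 2 * ((\<Sum>r\<in>R. (cmod (x r))\<^sup>2) + (\<Sum>s\<in>S. (cmod (y s))\<^sup>2))"
    using B0 rows cols by (intro mult_left_mono add_mono) auto
  finally show ?thesis by simp
qed

section \<open>The reduced norm on slices\<close>

lemma norm_eval_le_matnorm:
  fixes D :: "'g::group_add \<Rightarrow> 'a::topological_space set"
  assumes pa: "partial_action D al" and y: "y \<in> D (- s)"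
  shows "ennreal (cmod (f (y, s))) \<le> matnorm D al 1 (\<lambda>_ _. f)"
proof -
  define \<xi> \<zeta> where "\<xi> = (\<lambda>(i::nat) \<gamma>. if i = 0 \<and> \<gamma> = (y, 0::'g) then (1::complex) else 0)"
    and "\<zeta> = (\<lambda>(i::nat) \<gamma>. if i = 0 \<and> \<gamma> = (y, s) then (1::complex) else 0)"
  have supp: "supp \<xi> = {(0, (y, 0))}" "supp \<zeta> = {(0, (y, s))}"
    by (auto simp: supp_def \<xi>_def \<zeta>_def)
  have "\<xi> \<in> unit_vecs D 1 y" "\<zeta> \<in> unit_vecs D 1 y"
    unfolding unit_vecs_iff sqnorm_def supp
    using y partial_action_dom_zero[OF pa] by (auto simp: \<xi>_def \<zeta>_def fibre_def)
  moreover have "coeff al (\<lambda>_ _. f) \<xi> \<zeta> = f (y, s)"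
    unfolding coeff_eq_sum_supp supp
    by (simp add: \<xi>_def \<zeta>_def gmul_ginv_Pair partial_action_act_zero[OF pa])
  ultimately show ?thesis using coeff_le_matnorm by metis
qed

text \<open>On a single slice, the regular representation acts on the fibre as a weighted partial
  permutation.\<close>

lemma norm_coeff_slice_le:
  assumes h: "\<And>\<gamma>. h \<gamma> \<noteq> 0 \<Longrightarrow> snd \<gamma> = t" and hB: "\<And>\<gamma>. cmod (h \<gamma>) \<le> B" and B0: "B \<ge> 0"
    and \<xi>: "\<xi> \<in> unit_vecs D 1 y" and \<zeta>: "\<zeta> \<in> unit_vecs D 1 y"
  shows "cmod (coeff al (\<lambda>_ _. h) \<xi> \<zeta>) \<le> B"
proof -
  let ?S = "supp \<zeta>" and ?R = "supp \<xi>"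
  have fin: "finite ?S" "finite ?R" and norms: "sqnorm \<zeta> \<le> 1" "sqnorm \<xi> \<le> 1"
    using \<xi> \<zeta> unfolding unit_vecs_iff by auto
  have S: "fst s = 0 \<and> fst (snd s) = y" if "s \<in> ?S" for s
    using supp_unit_vecs[OF \<zeta> that] by (auto simp: fibre_def)
  have R: "fst r = 0 \<and> fst (snd r) = y" if "r \<in> ?R" for r
    using supp_unit_vecs[OF \<xi> that] by (auto simp: fibre_def)
  let ?P = "\<lambda>s r. snd (snd s) = t + snd (snd r)"
  have "cmod (\<Sum>s\<in>?S. \<Sum>r\<in>?R. h (gmul (snd s) (ginv al (snd r))) * \<xi> (fst r) (snd r) * cnj (\<zeta> (fst s) (snd s)))
    \<le> B * ((\<Sum>r\<in>?R. (cmod (\<xi> (fst r) (snd r)))\<^sup>2) + (\<Sum>s\<in>?S. (cmod (cnj (\<zeta> (fst s) (snd s))))\<^sup>2)) / 2"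
  proof (rule norm_sparse_bilinear_le[where P = ?P])
    fix s r assume "s \<in> ?S" "r \<in> ?R" "h (gmul (snd s) (ginv al (snd r))) \<noteq> 0"
    then have "snd (gmul (snd s) (ginv al (snd r))) = t" using h by blast
    then show "?P s r" by (simp add: gmul_def ginv_def diff_eq_eq)
  next
    fix r assume "r \<in> ?R"
    have sub: "{s\<in>?S. ?P s r} \<subseteq> {(0, (y, t + snd (snd r)))}"
    proof
      fix s assume "s \<in> {s\<in>?S. ?P s r}"
      then show "s \<in> {(0, (y, t + snd (snd r)))}" using S[of s] by (cases s) (simp add: prod_eq_iff)
    qed
    show "card {s\<in>?S. ?P s r} \<le> 1" using card_mono[OF _ sub] by simp
  next
    fix s assume "s \<in> ?S"
    have sub: "{r\<in>?R. ?P s r} \<subseteq> {(0, (y, - t + snd (snd s)))}"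
    proof
      fix r assume "r \<in> {r\<in>?R. ?P s r}"
      then show "r \<in> {(0, (y, - t + snd (snd s)))}"
        using R[of r] by (cases r) (simp add: prod_eq_iff minus_add_eq_iff)
    qed
    show "card {r\<in>?R. ?P s r} \<le> 1" using card_mono[OF _ sub] by simp
  qed (use fin hB B0 in auto)
  also have "\<dots> = B * (sqnorm \<xi> + sqnorm \<zeta>) / 2"
    by (simp add: sqnorm_def split_def)
  also have "\<dots> \<le> B"
    using mult_left_mono[of "sqnorm \<xi> + sqnorm \<zeta>" 2 B] norms B0 by simp
  finally show ?thesis by (simp add: coeff_eq_sum_supp split_def)
qed

lemma matnorm_slice_le:
  assumes "\<And>\<gamma>. h \<gamma> \<noteq> 0 \<Longrightarrow> snd \<gamma> = t" "\<And>\<gamma>. cmod (h \<gamma>) \<le> B" "B \<ge> 0"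
  shows "matnorm D al 1 (\<lambda>_ _. h) \<le> ennreal B"
  by (rule matnorm_leI) (rule norm_coeff_slice_le[OF assms])

definition slice :: "'g \<Rightarrow> ('a \<times> 'g \<Rightarrow> complex) \<Rightarrow> ('a \<times> 'g \<Rightarrow> complex)" where
  "slice t f = (\<lambda>\<gamma>. if snd \<gamma> = t then f \<gamma> else 0)"

definition slice_fun :: "('g::group_add \<Rightarrow> 'a set) \<Rightarrow> 'g \<Rightarrow> ('a \<times> 'g \<Rightarrow> complex) \<Rightarrow> 'a \<Rightarrow> complex" where
  "slice_fun D s f = (\<lambda>y. if y \<in> D (- s) then f (y, s) else 0)"

lemma sum_slice:
  assumes "finite F" "\<And>\<gamma>. f \<gamma> \<noteq> 0 \<Longrightarrow> snd \<gamma> \<in> F"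
  shows "(\<lambda>\<gamma>. \<Sum>t\<in>F. slice t f \<gamma>) = f"
proof
  fix \<gamma>
  show "(\<Sum>t\<in>F. slice t f \<gamma>) = f \<gamma>"
    using assms(1) assms(2)[of \<gamma>] by (cases "snd \<gamma> \<in> F") (auto simp: slice_def sum.delta')
qed

lemma Cc_matnorm_finite:
  assumes cpt: "\<forall>t. compact (D t)" and g: "Cc D g"
  shows "matnorm D al 1 (\<lambda>_ _. g) < \<top>"
proof -
  obtain F K where F: "finite F" and FK: "\<forall>x t. g (x, t) \<noteq> 0 \<longrightarrow> t \<in> F \<and> x \<in> K t"
    using g unfolding Cc_def by blast
  have off: "\<And>\<gamma>. \<gamma> \<notin> grpd D \<Longrightarrow> g \<gamma> = 0" and cont: "cont_G D g"
    using g unfolding Cc_def by auto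
  have "\<exists>b>0. \<forall>x\<in>D (- t). cmod (g (x, t)) \<le> b" for t
  proof -
    have "compact ((\<lambda>x. g (x, t)) ` D (- t))"
      using compact_continuous_image[of "D (- t)" "\<lambda>x. g (x, t)"] cont cpt
      unfolding cont_G_def by blast
    then have "bounded ((\<lambda>x. g (x, t)) ` D (- t))" by (rule compact_imp_bounded)
    then show ?thesis by (simp add: bounded_pos)
  qed
  then obtain b where b: "\<And>t. b t > 0" "\<And>t x. x \<in> D (- t) \<Longrightarrow> cmod (g (x, t)) \<le> b t"
    by metis
  have slice_le: "matnorm D al 1 (\<lambda>_ _. slice t g) \<le> ennreal (b t)" for t
  proof (rule matnorm_slice_le)
    show "cmod (slice t g \<gamma>) \<le> b t" for \<gamma>
    proof (cases "\<gamma> \<in> grpd D")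
      case True
      then show ?thesis using b by (cases \<gamma>) (auto simp: slice_def mem_grpd_iff less_imp_le)
    next
      case False
      then show ?thesis using b(1)[of t] off by (simp add: slice_def less_imp_le)
    qed
  qed (use b in \<open>auto simp: slice_def less_imp_le split: if_splits\<close>)
  have "g = (\<lambda>\<gamma>. \<Sum>t\<in>F. slice t g \<gamma>)"
    using FK by (intro sum_slice[symmetric] F) fastforce
  then have "matnorm D al 1 (\<lambda>_ _. g) \<le> (\<Sum>t\<in>F. matnorm D al 1 (\<lambda>_ _. slice t g))"
    using matnorm_sum_le[OF F, of D al 1 "\<lambda>t _ _. slice t g"] by simp
  also have "\<dots> \<le> (\<Sum>t\<in>F. ennreal (b t))"
    by (intro sum_mono slice_le)
  also have "\<dots> = ennreal (\<Sum>t\<in>F. b t)"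
    using b(1) by (intro sum_ennreal) (simp add: less_imp_le)
  also have "\<dots> < \<top>"
    by simp
  finally show ?thesis .
qed

lemma Cc_imp_Cr:
  assumes "Cc D g"
  shows "g \<in> Cr D al"
proof -
  have "\<forall>e>0. \<exists>g'. Cc D g' \<and> matnorm D al 1 (\<lambda>_ _ \<gamma>. g \<gamma> - g' \<gamma>) \<le> ennreal e"
    using assms by (intro allI impI exI[of _ g]) (simp add: matnorm_zero)
  moreover have "\<forall>\<gamma>. \<gamma> \<notin> grpd D \<longrightarrow> g \<gamma> = 0" using assms by (simp add: Cc_def)
  ultimately show ?thesis by (simp add: Cr_def)
qed

lemma Cr_vanishes: "f \<in> Cr D al \<Longrightarrow> \<gamma> \<notin> grpd D \<Longrightarrow> f \<gamma> = 0"
  unfolding Cr_def by blast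

lemma Cr_matnorm_finite:
  assumes cpt: "\<forall>t. compact (D t)" and f: "f \<in> Cr D al"
  shows "matnorm D al 1 (\<lambda>_ _. f) < \<top>"
proof -
  have "\<forall>e>0. \<exists>g. Cc D g \<and> matnorm D al 1 (\<lambda>_ _ \<gamma>. f \<gamma> - g \<gamma>) \<le> ennreal e"
    using f unfolding Cr_def by blast
  then obtain g where g: "Cc D g" and fg: "matnorm D al 1 (\<lambda>_ _ \<gamma>. f \<gamma> - g \<gamma>) \<le> ennreal 1"
    using zero_less_one by blast
  have "matnorm D al 1 (\<lambda>_ _. f) \<le> matnorm D al 1 (\<lambda>_ _ \<gamma>. f \<gamma> - g \<gamma>) + matnorm D al 1 (\<lambda>_ _. g)"
    using matnorm_add_le[of D al 1 "\<lambda>_ _ \<gamma>. f \<gamma> - g \<gamma>" "\<lambda>_ _. g"] by simp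
  also have "\<dots> < \<top>"
    using order_le_less_trans[OF fg ennreal_less_top] Cc_matnorm_finite[OF cpt g] by simp
  finally show ?thesis .
qed

lemma Cc_if_finite_slices:
  assumes cpt: "\<forall>t. compact (D t)" and off: "\<forall>\<gamma>. \<gamma> \<notin> grpd D \<longrightarrow> f \<gamma> = 0"
    and cont: "cont_G D f" and F: "finite F" and slices: "\<And>x t. t \<notin> F \<Longrightarrow> f (x, t) = 0"
  shows "Cc D f"
proof -
  have "\<forall>x t. f (x, t) \<noteq> 0 \<longrightarrow> t \<in> F \<and> x \<in> D (- t)"
    using slices off by (auto simp: mem_grpd_iff)
  then show ?thesis
    unfolding Cc_def using off cont F cpt by (intro conjI exI[of _ F] exI[of _ "\<lambda>t. D (- t)"]) auto
qed

lemma chi_Cc: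
  assumes cpt: "\<forall>t. compact (D t)"
  shows "Cc D (chi D t)"
proof (rule Cc_if_finite_slices[where F = "{t}", OF cpt])
  show "\<forall>\<gamma>. \<gamma> \<notin> grpd D \<longrightarrow> chi D t \<gamma> = 0" by (auto simp: chi_def grpd_def)
  have "continuous_on (D (- s)) (\<lambda>x. chi D t (x, s))" for s
  proof (cases "s = t")
    case True
    have "continuous_on (D (- s)) (\<lambda>x. 1::complex)" by simp
    then show ?thesis
      by (rule continuous_on_cong[THEN iffD2, OF refl, rotated]) (simp add: chi_def True)
  qed (simp add: chi_def)
  then show "cont_G D (chi D t)" unfolding cont_G_def ..
qed (simp_all add: chi_def)

lemma rnorm_chi_le_1: "rnorm D al (chi D t) \<le> 1"
proof -
  have on_slice: "snd \<gamma> = t" if "chi D t \<gamma> \<noteq> 0" for \<gamma>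
    using that by (cases \<gamma>) (simp add: chi_def split: if_splits)
  have bound: "cmod (chi D t \<gamma>) \<le> 1" for \<gamma>
    by (cases \<gamma>) (simp add: chi_def)
  have "matnorm D al 1 (\<lambda>_ _. chi D t) \<le> ennreal 1"
    by (rule matnorm_slice_le[OF on_slice bound zero_le_one])
  then show ?thesis unfolding rnorm_def by (rule enn2real_leI[rotated]) simp
qed

lemma Cr_continuous_on_slice:
  assumes pa: "partial_action D al" and f: "f \<in> Cr D al"
  shows "continuous_on (D (- t)) (\<lambda>x. f (x, t))"
proof -
  have "\<forall>n. \<exists>g. Cc D g \<and> matnorm D al 1 (\<lambda>_ _ \<gamma>. f \<gamma> - g \<gamma>) \<le> ennreal (1 / Suc n)"
    using f unfolding Cr_def by auto
  then obtain G where G: "\<And>n. Cc D (G n)"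
    and fG: "\<And>n. matnorm D al 1 (\<lambda>_ _ \<gamma>. f \<gamma> - G n \<gamma>) \<le> ennreal (1 / Suc n)"
    by metis
  have close: "dist (G n (x, t)) (f (x, t)) \<le> 1 / Suc n" if "x \<in> D (- t)" for x n
  proof -
    have "ennreal (cmod (f (x, t) - G n (x, t))) \<le> ennreal (1 / Suc n)"
      using order_trans[OF norm_eval_le_matnorm[OF pa that] fG] by simp
    then show ?thesis by (simp add: dist_norm norm_minus_commute ennreal_le_iff)
  qed
  show ?thesis
  proof (rule uniform_limit_theorem)
    show "\<forall>\<^sub>F n in sequentially. continuous_on (D (- t)) ((\<lambda>n x. G n (x, t)) n)"
      using G unfolding Cc_def cont_G_def by simp
    show "uniform_limit (D (- t)) (\<lambda>n x. G n (x, t)) (\<lambda>x. f (x, t)) sequentially"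
    proof (rule uniform_limitI)
      fix e :: real assume "e > 0"
      then obtain N where N: "inverse (real (Suc N)) < e" using reals_Archimedean by blast
      have "dist (G n (x, t)) (f (x, t)) < e" if "N \<le> n" "x \<in> D (- t)" for n x
      proof -
        have "1 / real (Suc n) \<le> inverse (real (Suc N))" using that by (simp add: field_simps)
        then show ?thesis using close[OF that(2), of n] N by linarith
      qed
      then show "\<forall>\<^sub>F n in sequentially. \<forall>x\<in>D (- t). dist (G n (x, t)) (f (x, t)) < e"
        unfolding eventually_sequentially by blast
    qed
  qed simp
qed

lemma slice_Cc:
  assumes pa: "partial_action D al" and cpt: "\<forall>t. compact (D t)" and f: "f \<in> Cr D al"
  shows "Cc D (slice s f)"
proof (rule Cc_if_finite_slices[where F = "{s}", OF cpt])
  show "\<forall>\<gamma>. \<gamma> \<notin> grpd D \<longrightarrow> slice s f \<gamma> = 0" using Cr_vanishes[OF f] by (auto simp: slice_def)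
  have "continuous_on (D (- t)) (\<lambda>x. slice s f (x, t))" for t
    using Cr_continuous_on_slice[OF pa f, of t] by (cases "t = s") (auto simp: slice_def)
  then show "cont_G D (slice s f)" unfolding cont_G_def ..
qed (simp_all add: slice_def)

lemma slice_eq_ract_chi:
  fixes f :: "'a::topological_space \<times> 'g::group_add \<Rightarrow> complex"
  assumes f: "f \<in> Cr D al"
  shows "slice s f = ract (chi D s) (slice_fun D s f)"
proof
  fix \<gamma> :: "'a \<times> 'g"
  obtain x t where \<gamma>: "\<gamma> = (x, t)" by (cases \<gamma>)
  show "slice s f \<gamma> = ract (chi D s) (slice_fun D s f) \<gamma>"
    using Cr_vanishes[OF f, of "(x, s)"] unfolding \<gamma>
    by (auto simp: slice_def ract_def chi_def slice_fun_def mem_grpd_iff)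
qed

lemma slice_fun_C0:
  fixes D :: "'g::group_add \<Rightarrow> 'a::t2_space set"
  assumes pa: "partial_action D al" and cpt: "\<forall>t. compact (D t)" and f: "f \<in> Cr D al"
  shows "C0 (slice_fun D s f)"
  unfolding C0_def
proof (intro conjI allI impI)
  have "continuous_on (D (- s) \<union> - D (- s)) (\<lambda>y. if y \<in> D (- s) then f (y, s) else 0)"
    using cpt partial_action_open[OF pa] Cr_continuous_on_slice[OF pa f, of s]
    by (intro continuous_on_cases) (auto simp: compact_imp_closed)
  then show "continuous_on UNIV (slice_fun D s f)" by (simp add: slice_fun_def)
  fix e :: real assume "e > 0"
  moreover have "compact (UNIV :: 'a set)" using cpt partial_action_dom_zero[OF pa] by metis
  ultimately show "\<exists>K. compact K \<and> (\<forall>x. x \<notin> K \<longrightarrow> cmod (slice_fun D s f x) < e)" by blast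
qed

section \<open>The symbol \<open>\<phi>\<^sub>T\<close>\<close>

lemma Ainner_eq_infsum:
  assumes pa: "partial_action D al"
  shows "Ainner D al g f x = infsum (\<lambda>\<eta>. cnj (g \<eta>) * f \<eta>) (fibre D x)"
  unfolding Ainner_def Econd_def conv_def
proof (simp, rule infsum_cong)
  fix \<eta> assume "\<eta> \<in> fibre D x"
  then obtain s where \<eta>: "\<eta> = (x, s)" and xs: "x \<in> D (- s)" by (auto simp: fibre_def)
  show "star al g (gmul (x, 0) (ginv al \<eta>)) * f \<eta> = cnj (g \<eta>) * f \<eta>"
    unfolding \<eta> using partial_action_inverse[OF pa xs] by (simp add: star_def gmul_def ginv_def)
qed

lemma infsum_fibre_single:
  assumes "x \<in> D (- t)" "\<And>\<eta>. \<eta> \<in> fibre D x \<Longrightarrow> \<eta> \<noteq> (x, t) \<Longrightarrow> f \<eta> = 0"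
  shows "infsum f (fibre D x) = f (x, t)"
proof -
  have "infsum f (fibre D x) = infsum f {(x, t)}"
    using assms by (intro infsum_cong_neutral) (auto simp: fibre_def)
  then show ?thesis by simp
qed

lemma Ainner_chi_left:
  assumes pa: "partial_action D al" and x: "x \<in> D (- t)"
  shows "Ainner D al (chi D t) f x = f (x, t)"
proof -
  have "Ainner D al (chi D t) f x = cnj (chi D t (x, t)) * f (x, t)"
    unfolding Ainner_eq_infsum[OF pa]
    by (rule infsum_fibre_single[where D = D and t = t, OF x]) (auto simp: chi_def fibre_def split: if_splits)
  then show ?thesis using x by (simp add: chi_def)
qed

lemma Ainner_chi_right:
  assumes pa: "partial_action D al" and x: "x \<in> D (- t)"
  shows "Ainner D al g (chi D t) x = cnj (g (x, t))"
proof -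
  have "Ainner D al g (chi D t) x = cnj (g (x, t)) * chi D t (x, t)"
    unfolding Ainner_eq_infsum[OF pa]
    by (rule infsum_fibre_single[where D = D and t = t, OF x]) (auto simp: chi_def fibre_def split: if_splits)
  then show ?thesis using x by (simp add: chi_def)
qed

lemma phiT_eq_T_chi:
  "partial_action D al \<Longrightarrow> x \<in> D (- t) \<Longrightarrow> phiT D al T (x, t) = T (chi D t) (x, t)"
  using Ainner_chi_left[of D al x t] by (simp add: phiT_def Ainner_def grpd_def)

lemma phiT_off_grpd: "x \<notin> D (- t) \<Longrightarrow> phiT D al T (x, t) = 0"
  by (simp add: phiT_def grpd_def)

lemma T_chi_Cr: "\<forall>t. compact (D t) \<Longrightarrow> bounded_Alinear D al T \<Longrightarrow> T (chi D t) \<in> Cr D al"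
  using Cc_imp_Cr[OF chi_Cc] unfolding bounded_Alinear_def by blast

lemma phiT_cont_G:
  assumes pa: "partial_action D al" and cpt: "\<forall>t. compact (D t)" and T: "bounded_Alinear D al T"
  shows "cont_G D (phiT D al T)"
  unfolding cont_G_def
proof
  fix t
  show "continuous_on (D (- t)) (\<lambda>x. phiT D al T (x, t))"
    using Cr_continuous_on_slice[OF pa T_chi_Cr[OF cpt T]]
    by (rule continuous_on_cong[THEN iffD1, OF refl, rotated]) (simp add: phiT_eq_T_chi[OF pa])
qed

section \<open>Boundedness of \<open>\<phi>\<^sub>T\<close>\<close>

lemma rnorm_le_opnorm:
  assumes T: "bounded_Alinear D al T" and f: "f \<in> Cr D al" "rnorm D al f \<le> 1"
  shows "rnorm D al (T f) \<le> opnorm D al T"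
proof -
  obtain C where C: "\<forall>f\<in>Cr D al. rnorm D al (T f) \<le> C * rnorm D al f"
    using T unfolding bounded_Alinear_def by blast
  have "r \<le> \<bar>C\<bar>" if r: "r \<in> {rnorm D al (T f) | f. f \<in> Cr D al \<and> rnorm D al f \<le> 1}" for r
  proof -
    obtain f where f: "f \<in> Cr D al" "rnorm D al f \<le> 1" and r: "r = rnorm D al (T f)"
      using r by blast
    have "r \<le> C * rnorm D al f" using C f r by blast
    also have "\<dots> \<le> \<bar>C\<bar> * 1"
      using f(2) by (intro mult_mono) (auto simp: rnorm_def)
    finally show ?thesis by simp
  qed
  then show ?thesis unfolding opnorm_def using f by (intro cSup_upper bdd_aboveI) auto
qed

lemma norm_phiT_le_opnorm:
  assumes pa: "partial_action D al" and cpt: "\<forall>t. compact (D t)" and T: "bounded_Alinear D al T"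
  shows "cmod (phiT D al T \<gamma>) \<le> opnorm D al T"
proof -
  obtain x t where \<gamma>: "\<gamma> = (x, t)" by (cases \<gamma>)
  have op: "rnorm D al (T (chi D t)) \<le> opnorm D al T"
    using rnorm_le_opnorm[OF T Cc_imp_Cr[OF chi_Cc[OF cpt]] rnorm_chi_le_1] .
  show ?thesis
  proof (cases "x \<in> D (- t)")
    case True
    have "ennreal (cmod (T (chi D t) (x, t))) \<le> matnorm D al 1 (\<lambda>_ _. T (chi D t))"
      by (rule norm_eval_le_matnorm[OF pa True])
    then have "cmod (T (chi D t) (x, t)) \<le> rnorm D al (T (chi D t))"
      unfolding rnorm_def using Cr_matnorm_finite[OF cpt T_chi_Cr[OF cpt T]]
      by (intro le_enn2real_if_ennreal_le) auto
    then show ?thesis using op phiT_eq_T_chi[OF pa True] \<gamma> by simp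
  next
    case False
    have "0 \<le> rnorm D al (T (chi D t))" by (simp add: rnorm_def)
    then show ?thesis using op phiT_off_grpd[where D = D and t = t, OF False] \<gamma> by simp
  qed
qed

lemma phiT_Cb:
  assumes pa: "partial_action D al" and cpt: "\<forall>t. compact (D t)" and T: "bounded_Alinear D al T"
  shows "Cb D (phiT D al T) \<and> (SUP \<gamma>\<in>grpd D. cmod (phiT D al T \<gamma>)) \<le> opnorm D al T"
proof
  have "\<forall>\<gamma>. \<gamma> \<notin> grpd D \<longrightarrow> phiT D al T \<gamma> = 0" by (auto simp: phiT_def)
  then show "Cb D (phiT D al T)"
    unfolding Cb_def using phiT_cont_G[OF pa cpt T] norm_phiT_le_opnorm[OF pa cpt T] by blast
  have "(undefined, 0) \<in> grpd D" using partial_action_dom_zero[OF pa] by (simp add: mem_grpd_iff)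
  then show "(SUP \<gamma>\<in>grpd D. cmod (phiT D al T \<gamma>)) \<le> opnorm D al T"
    using norm_phiT_le_opnorm[OF pa cpt T] by (intro cSUP_least) auto
qed

section \<open>Compact support of \<open>\<phi>\<^sub>T\<close> for operators of finite A-rank\<close>

lemma has_sum_finite_sum:
  fixes f :: "'i \<Rightarrow> 'b \<Rightarrow> 'c::topological_comm_monoid_add"
  assumes "finite I" "\<And>i. i \<in> I \<Longrightarrow> (f i has_sum s i) S"
  shows "((\<lambda>x. \<Sum>i\<in>I. f i x) has_sum (\<Sum>i\<in>I. s i)) S"
  using assms by (induction I rule: finite_induct) (auto intro: has_sum_add)

text \<open>The hypotheses say that \<open>u = \<Sum>\<^sub>i c\<^sub>i cnj (g\<^sub>i)\<close> pairs to zero with every \<open>g\<^sub>k\<close>;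
  hence \<open>\<Sum>\<^sub>\<eta> |u \<eta>|\<^sup>2 = 0\<close>.\<close>

lemma lincomb_vanishes_if_Gram_orthogonal:
  fixes g :: "'i \<Rightarrow> 'b \<Rightarrow> complex"
  assumes I: "finite I"
    and Gram: "\<And>i k. i \<in> I \<Longrightarrow> k \<in> I \<Longrightarrow> ((\<lambda>\<eta>. cnj (g i \<eta>) * g k \<eta>) has_sum A i k) S"
    and orth: "\<And>k. k \<in> I \<Longrightarrow> (\<Sum>i\<in>I. c i * A i k) = 0"
    and \<eta>: "\<eta> \<in> S"
  shows "(\<Sum>i\<in>I. c i * cnj (g i \<eta>)) = 0"
proof -
  define u where "u \<eta> = (\<Sum>i\<in>I. c i * cnj (g i \<eta>))" for \<eta>
  have u_sq: "u \<eta> * cnj (u \<eta>) = (\<Sum>k\<in>I. cnj (c k) * (\<Sum>i\<in>I. c i * (cnj (g i \<eta>) * g k \<eta>)))" for \<eta>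
  proof -
    have "u \<eta> * cnj (u \<eta>) = (\<Sum>i\<in>I. c i * cnj (g i \<eta>)) * (\<Sum>k\<in>I. cnj (c k) * g k \<eta>)"
      by (simp add: u_def cnj_sum)
    also have "\<dots> = (\<Sum>k\<in>I. \<Sum>i\<in>I. (c i * cnj (g i \<eta>)) * (cnj (c k) * g k \<eta>))"
      by (subst sum.swap) (rule sum_product)
    also have "\<dots> = (\<Sum>k\<in>I. cnj (c k) * (\<Sum>i\<in>I. c i * (cnj (g i \<eta>) * g k \<eta>)))"
      by (simp add: sum_distrib_left mult_ac)
    finally show ?thesis .
  qed
  have "((\<lambda>\<eta>. u \<eta> * cnj (u \<eta>)) has_sum (\<Sum>k\<in>I. cnj (c k) * (\<Sum>i\<in>I. c i * A i k))) S"
    unfolding u_sq using I Gram by (intro has_sum_finite_sum has_sum_cmult_right) auto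
  also have "(\<Sum>k\<in>I. cnj (c k) * (\<Sum>i\<in>I. c i * A i k)) = 0"
    using orth by simp
  finally have "u \<eta> * cnj (u \<eta>) = 0"
    using \<eta> by (intro nonneg_infsum_le_0D_complex[where A = S])
      (auto simp: infsumI has_sum_imp_summable complex_mult_cnj less_eq_complex_def)
  then have "u \<eta> = 0" by simp
  then show ?thesis by (simp add: u_def)
qed

lemma le_square_if_le_mult_sqrt:
  fixes q M :: real
  assumes le: "q \<le> M * sqrt q" and q: "0 \<le> q" and M: "0 \<le> M"
  shows "q \<le> M\<^sup>2"
proof (cases "q = 0")
  case False
  then have pos: "sqrt q > 0" using q by simp
  have "sqrt q * sqrt q \<le> M * sqrt q" using le q by simp
  then have "sqrt q \<le> M" using pos by (rule mult_right_le_imp_le)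
  then have "(sqrt q)\<^sup>2 \<le> M\<^sup>2" using q by (intro power_mono) auto
  then show ?thesis using q by simp
qed (use M in simp)

lemma sum_sq_fibre_le_matnorm:
  fixes f :: "'a::topological_space \<times> 'g::group_add \<Rightarrow> complex"
  assumes pa: "partial_action D al" and M: "matnorm D al 1 (\<lambda>_ _. f) < \<top>"
    and S: "finite S" "S \<subseteq> fibre D y"
  shows "(\<Sum>\<eta>\<in>S. (cmod (f \<eta>))\<^sup>2) \<le> (enn2real (matnorm D al 1 (\<lambda>_ _. f)))\<^sup>2"
proof -
  define M where "M = enn2real (matnorm D al 1 (\<lambda>_ _. f))"
  define Q where "Q = (\<Sum>\<eta>\<in>S. (cmod (f \<eta>))\<^sup>2)"
  define \<xi> where "\<xi> = (\<lambda>(i::nat) \<gamma>. if i = 0 \<and> \<gamma> = (y, 0::'g) then (1::complex) else 0)"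
  define \<zeta> where "\<zeta> = (\<lambda>(i::nat) \<gamma>. if i = 0 \<and> \<gamma> \<in> S then f \<gamma> else 0)"
  have supp_\<xi>: "supp \<xi> = {(0, (y, 0))}" by (auto simp: supp_def \<xi>_def)
  have supp_\<zeta>: "supp \<zeta> \<subseteq> Pair 0 ` S" by (auto simp: supp_def \<zeta>_def)
  have inj: "inj_on (Pair (0::nat)) S" by (auto simp: inj_on_def)
  have fin: "finite (Pair (0::nat) ` S)" using S by simp
  have "sqnorm \<zeta> = Q"
    unfolding sqnorm_eq_sum_superset[OF fin supp_\<zeta>] Q_def by (simp add: sum.reindex[OF inj] \<zeta>_def)
  moreover have "sqnorm \<xi> = 1" unfolding sqnorm_def supp_\<xi> by (simp add: \<xi>_def)
  moreover have "coeff al (\<lambda>_ _. f) \<xi> \<zeta> = of_real Q"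
  proof -
    have "coeff al (\<lambda>_ _. f) \<xi> \<zeta> = (\<Sum>\<gamma>\<in>S. f (gmul \<gamma> (ginv al (y, 0))) * cnj (f \<gamma>))"
      by (subst coeff_eq_sum_superset[OF fin supp_\<zeta> _ equalityD1[OF supp_\<xi>]])
        (simp_all add: sum.reindex[OF inj] \<xi>_def \<zeta>_def)
    also have "\<dots> = (\<Sum>\<gamma>\<in>S. of_real ((cmod (f \<gamma>))\<^sup>2))"
    proof (rule sum.cong[OF refl])
      fix \<gamma> assume "\<gamma> \<in> S"
      then have "gmul \<gamma> (ginv al (y, 0)) = \<gamma>"
        using S partial_action_act_zero[OF pa] by (auto simp: fibre_def gmul_ginv_Pair)
      then show "f (gmul \<gamma> (ginv al (y, 0))) * cnj (f \<gamma>) = of_real ((cmod (f \<gamma>))\<^sup>2)"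
        using complex_norm_square[of "f \<gamma>"] by simp
    qed
    finally show ?thesis by (simp add: Q_def)
  qed
  moreover have "cmod (coeff al (\<lambda>_ _. f) \<xi> \<zeta>) \<le> M * sqrt (sqnorm \<xi>) * sqrt (sqnorm \<zeta>)"
    unfolding M_def using S supp_\<xi> finite_subset[OF supp_\<zeta> fin] partial_action_dom_zero[OF pa] M
    by (intro norm_coeff_le_matnorm_sqnorm) (auto simp: \<xi>_def \<zeta>_def fibre_def split: if_splits)
  moreover have Q0: "Q \<ge> 0" unfolding Q_def by (intro sum_nonneg) simp
  ultimately have "Q \<le> M * sqrt Q" by simp
  moreover have "0 \<le> M" by (simp add: M_def)
  ultimately have "Q \<le> M\<^sup>2" using Q0 by (intro le_square_if_le_mult_sqrt)
  then show ?thesis by (simp add: Q_def M_def)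
qed

lemma Cr_Ainner_summable:
  assumes pa: "partial_action D al" and cpt: "\<forall>t. compact (D t)"
    and f: "f \<in> Cr D al" and g: "g \<in> Cr D al"
  shows "(\<lambda>\<eta>. cnj (f \<eta>) * g \<eta>) summable_on fibre D y"
proof -
  have sq: "(\<lambda>\<eta>. (cmod (h \<eta>))\<^sup>2) summable_on fibre D y" if "h \<in> Cr D al" for h
    using sum_sq_fibre_le_matnorm[OF pa Cr_matnorm_finite[OF cpt that]]
    by (intro nonneg_bdd_above_summable_on bdd_aboveI) auto
  have "(\<lambda>\<eta>. norm (cnj (f \<eta>) * g \<eta>)) summable_on fibre D y"
  proof (rule summable_on_comparison_test[OF summable_on_add[OF sq[OF f] sq[OF g]]])
    show "norm (cnj (f \<eta>) * g \<eta>) \<le> (cmod (f \<eta>))\<^sup>2 + (cmod (g \<eta>))\<^sup>2" for \<eta>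
    proof -
      have "0 \<le> cmod (f \<eta>) * cmod (g \<eta>)" by simp
      moreover have "2 * (cmod (f \<eta>) * cmod (g \<eta>)) \<le> (cmod (f \<eta>))\<^sup>2 + (cmod (g \<eta>))\<^sup>2"
        using sum_squares_bound[of "cmod (f \<eta>)" "cmod (g \<eta>)"] by (simp add: mult.assoc)
      moreover have "norm (cnj (f \<eta>) * g \<eta>) = cmod (f \<eta>) * cmod (g \<eta>)"
        by (simp add: norm_mult)
      ultimately show ?thesis by linarith
    qed
  qed simp
  then show ?thesis by (rule abs_summable_summable)
qed

lemma in_span_A_chi_finite_slices:
  assumes "in_span_A_chi D f"
  shows "\<exists>F. finite F \<and> (\<forall>x t. t \<notin> F \<longrightarrow> f (x, t) = 0)"
proof -
  obtain F a where "finite F" and f: "f = (\<lambda>\<gamma>. \<Sum>t\<in>F. ract (chi D t) (a t) \<gamma>)"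
    using assms unfolding in_span_A_chi_def by blast
  moreover have "f (x, t) = 0" if "t \<notin> F" for x t
    unfolding f using that by (intro sum.neutral) (auto simp: ract_def chi_def)
  ultimately show ?thesis by blast
qed

lemma phiT_Cc:
  assumes pa: "partial_action D al" and cpt: "\<forall>t. compact (D t)" and T: "bounded_Alinear D al T"
    and rank: "finite_Arank D al T" and span: "\<forall>f\<in>Cr D al. in_span_A_chi D (T f)"
  shows "Cc D (phiT D al T)"
proof -
  obtain n :: nat and h g where hg: "\<forall>i<n. h i \<in> Cr D al \<and> g i \<in> Cr D al"
    and Tf: "\<forall>f\<in>Cr D al. T f = (\<lambda>\<gamma>. \<Sum>i<n. ract (h i) (Ainner D al (g i) f) \<gamma>)"
    using rank unfolding finite_Arank_def by blast
  have "\<exists>F. finite F \<and> (\<forall>x t. t \<notin> F \<longrightarrow> T (g k) (x, t) = 0)" if "k < n" for k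
    using span hg that by (intro in_span_A_chi_finite_slices) blast
  then obtain FF where FF: "\<And>k. k < n \<Longrightarrow> finite (FF k) \<and> (\<forall>x t. t \<notin> FF k \<longrightarrow> T (g k) (x, t) = 0)"
    by metis
  define F where "F = (\<Union>k<n. FF k)"
  have "finite F" unfolding F_def using FF by blast
  have T_eval: "T f (x, t) = (\<Sum>i<n. h i (x, t) * Ainner D al (g i) f x)" if "f \<in> Cr D al" for f x t
    using Tf that by (simp add: ract_def)
  have vanish: "phiT D al T (x, t) = 0" if "t \<notin> F" for x t
  proof (cases "x \<in> D (- t)")
    case False
    then show ?thesis by (rule phiT_off_grpd)
  next
    case xt: True
    have "(\<Sum>i<n. h i (x, t) * cnj (g i (x, t))) = 0"
    proof (rule lincomb_vanishes_if_Gram_orthogonal[where S = "fibre D x"])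
      fix i k assume "i \<in> {..<n}" "k \<in> {..<n}"
      then show "((\<lambda>\<eta>. cnj (g i \<eta>) * g k \<eta>) has_sum Ainner D al (g i) (g k) x) (fibre D x)"
        using hg by (simp add: Ainner_eq_infsum[OF pa] Cr_Ainner_summable[OF pa cpt])
    next
      fix k assume k: "k \<in> {..<n}"
      then have "t \<notin> FF k" using that unfolding F_def by blast
      then show "(\<Sum>i<n. h i (x, t) * Ainner D al (g i) (g k) x) = 0"
        using FF[of k] T_eval[of "g k"] hg k by auto
    qed (use xt in \<open>auto simp: fibre_def\<close>)
    moreover have "phiT D al T (x, t) = (\<Sum>i<n. h i (x, t) * cnj (g i (x, t)))"
      using phiT_eq_T_chi[OF pa xt] T_eval[OF Cc_imp_Cr[OF chi_Cc[OF cpt]]]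
      by (simp add: Ainner_chi_right[OF pa xt])
    ultimately show ?thesis by simp
  qed
  have "\<forall>\<gamma>. \<gamma> \<notin> grpd D \<longrightarrow> phiT D al T \<gamma> = 0" by (auto simp: phiT_def)
  then show ?thesis
    using Cc_if_finite_slices[OF cpt _ phiT_cont_G[OF pa cpt T] \<open>finite F\<close> vanish] by blast
qed

section \<open>The multiplier norm of \<open>\<phi>\<^sub>T\<close>\<close>

lemma sum_sum_if_eq_group:
  assumes S: "finite S" and R: "finite R" and K: "finite K" and sub: "kf ` S \<subseteq> K"
  shows "(\<Sum>s\<in>S. \<Sum>r\<in>R. if kf s = kr r then X s r else 0) =
         (\<Sum>k\<in>K. \<Sum>s\<in>{s\<in>S. kf s = k}. \<Sum>r\<in>{r\<in>R. kr r = k}. X s r)"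
proof -
  have "(\<Sum>k\<in>K. \<Sum>s\<in>{s\<in>S. kf s = k}. \<Sum>r\<in>{r\<in>R. kr r = k}. X s r) =
        (\<Sum>k\<in>K. \<Sum>s\<in>{s\<in>S. kf s = k}. \<Sum>r\<in>R. if kf s = kr r then X s r else 0)"
    using R by (intro sum.cong[OF refl]) (auto simp: sum.inter_filter eq_commute)
  also have "\<dots> = (\<Sum>s\<in>S. \<Sum>r\<in>R. if kf s = kr r then X s r else 0)"
    by (rule sum.group[OF S K sub])
  finally show ?thesis by simp
qed

text \<open>Amplification re-indexes an \<open>n \<times> n\<close> matrix by pairs (row of \<open>F\<close>, group label), encoded by
  \<open>a \<mapsto> (idx a, lab a)\<close>. Against vectors on a fibre it splits into the blocks \<open>block lab p = k\<close>, on
  each of which it acts as \<open>F\<close> on the compressed vectors; so it does not increase the norm.\<close>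

definition amplify :: "(nat \<Rightarrow> nat) \<Rightarrow> (nat \<Rightarrow> 'g::group_add) \<Rightarrow> (nat \<Rightarrow> nat \<Rightarrow> 'a \<times> 'g \<Rightarrow> complex) \<Rightarrow>
    nat \<Rightarrow> nat \<Rightarrow> 'a \<times> 'g \<Rightarrow> complex" where
  "amplify idx lab F a b = slice (lab a + - lab b) (F (idx a) (idx b))"

definition block :: "(nat \<Rightarrow> 'g::group_add) \<Rightarrow> nat \<times> ('a \<times> 'g) \<Rightarrow> 'g" where
  "block lab p = - lab (fst p) + snd (snd p)"

definition compress :: "(nat \<Rightarrow> nat) \<Rightarrow> (nat \<Rightarrow> 'g::group_add) \<Rightarrow> nat \<Rightarrow> (nat \<Rightarrow> 'a \<times> 'g \<Rightarrow> complex) \<Rightarrow>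
    'g \<Rightarrow> nat \<Rightarrow> 'a \<times> 'g \<Rightarrow> complex" where
  "compress idx lab m w k = (\<lambda>j \<eta>. \<Sum>a\<in>{a. a < m \<and> idx a = j \<and> lab a = snd \<eta> + - k}. w a \<eta>)"

lemma finite_block_supp:
  assumes "w \<in> unit_vecs D m y"
  shows "finite (f ` {p \<in> supp w. block lab p = k})"
  using assms unfolding unit_vecs_iff by (intro finite_imageI) (auto intro: rev_finite_subset)

context
  fixes idx :: "nat \<Rightarrow> nat" and lab :: "nat \<Rightarrow> 'g::group_add" and m n :: nat
  assumes idx_less: "\<And>a. a < m \<Longrightarrow> idx a < n"
    and inj_idx_lab: "inj_on (\<lambda>a. (idx a, lab a)) {..<m}"
begin

lemma block_eq_iff: "block lab p = k \<longleftrightarrow> lab (fst p) = snd (snd p) + - k"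
  unfolding block_def minus_add_eq_iff by (auto simp: add.assoc)

lemma supp_compress_subset:
  assumes w: "w \<in> unit_vecs D m y"
  shows "supp (compress idx lab m w k) \<subseteq> apfst idx ` {p \<in> supp w. block lab p = k}"
proof
  fix q assume "q \<in> supp (compress idx lab m w k)"
  then obtain j \<eta> where q: "q = (j, \<eta>)" and "compress idx lab m w k j \<eta> \<noteq> 0"
    by (auto simp: supp_def)
  then obtain a where a: "a < m" "idx a = j" "lab a = snd \<eta> + - k" and "w a \<eta> \<noteq> 0"
    unfolding compress_def by (auto dest: sum.not_neutral_contains_not_neutral)
  then have "(a, \<eta>) \<in> {p \<in> supp w. block lab p = k}"
    by (simp add: supp_def block_eq_iff)
  moreover have "q = apfst idx (a, \<eta>)" using q a by simp
  ultimately show "q \<in> apfst idx ` {p \<in> supp w. block lab p = k}" by blast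
qed

lemma compress_apfst:
  assumes w: "w \<in> unit_vecs D m y" and p: "p \<in> supp w" "block lab p = k"
  shows "compress idx lab m w k (idx (fst p)) (snd p) = w (fst p) (snd p)"
proof -
  have "fst p < m" using supp_unit_vecs[OF w p(1)] by simp
  moreover have "lab (fst p) = snd (snd p) + - k" using p(2) by (simp add: block_eq_iff)
  ultimately have "{a. a < m \<and> idx a = idx (fst p) \<and> lab a = snd (snd p) + - k} = {fst p}"
    using inj_idx_lab unfolding inj_on_def by auto
  then show ?thesis unfolding compress_def by simp
qed

lemma inj_on_apfst_block:
  assumes w: "w \<in> unit_vecs D m y"
  shows "inj_on (apfst idx) {p \<in> supp w. block lab p = k}"
proof (rule inj_onI)
  fix p q assume p: "p \<in> {p \<in> supp w. block lab p = k}" and q: "q \<in> {p \<in> supp w. block lab p = k}"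
    and eq: "apfst idx p = apfst idx q"
  have "fst p < m" "fst q < m" using supp_unit_vecs[OF w] p q by auto
  moreover have "idx (fst p) = idx (fst q)" "snd p = snd q"
    using eq by (auto simp: apfst_def map_prod_def split_def)
  moreover have "lab (fst p) = lab (fst q)"
    using p q \<open>snd p = snd q\<close> by (simp add: block_eq_iff)
  ultimately show "p = q" using inj_idx_lab unfolding inj_on_def by (auto simp: prod_eq_iff)
qed

lemma compress_vector:
  assumes w: "w \<in> unit_vecs D m y"
  shows "finite (supp (compress idx lab m w k))"
    and "\<forall>j \<eta>. compress idx lab m w k j \<eta> \<noteq> 0 \<longrightarrow> j < n \<and> \<eta> \<in> fibre D y"
proof -
  show "finite (supp (compress idx lab m w k))"
    by (rule finite_subset[OF supp_compress_subset[OF w] finite_block_supp[OF w]])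
  show "\<forall>j \<eta>. compress idx lab m w k j \<eta> \<noteq> 0 \<longrightarrow> j < n \<and> \<eta> \<in> fibre D y"
  proof (intro allI impI)
    fix j \<eta> assume "compress idx lab m w k j \<eta> \<noteq> 0"
    then have "(j, \<eta>) \<in> apfst idx ` {p \<in> supp w. block lab p = k}"
      using supp_compress_subset[OF w] by (auto simp: supp_def)
    then show "j < n \<and> \<eta> \<in> fibre D y" using supp_unit_vecs[OF w] idx_less by force
  qed
qed

lemma sqnorm_compress:
  assumes w: "w \<in> unit_vecs D m y"
  shows "sqnorm (compress idx lab m w k) = (\<Sum>p\<in>{p \<in> supp w. block lab p = k}. (cmod (w (fst p) (snd p)))\<^sup>2)"
  unfolding sqnorm_eq_sum_superset[OF finite_block_supp[OF w] supp_compress_subset[OF w]] split_def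
  by (simp add: sum.reindex[OF inj_on_apfst_block[OF w]] compress_apfst[OF w])

lemma sum_sqnorm_compress:
  assumes w: "w \<in> unit_vecs D m y" and K: "finite K" "block lab ` supp w \<subseteq> K"
  shows "(\<Sum>k\<in>K. sqnorm (compress idx lab m w k)) = sqnorm w"
proof -
  have "finite (supp w)" using w unfolding unit_vecs_iff by blast
  then have "(\<Sum>k\<in>K. \<Sum>p\<in>{p \<in> supp w. block lab p = k}. (cmod (w (fst p) (snd p)))\<^sup>2) = sqnorm w"
    unfolding sqnorm_def split_def using K by (intro sum.group) auto
  then show ?thesis by (simp add: sqnorm_compress[OF w])
qed

lemma coeff_compress:
  assumes \<xi>: "\<xi> \<in> unit_vecs D m y" and \<zeta>: "\<zeta> \<in> unit_vecs D m y"
  shows "coeff al F (compress idx lab m \<xi> k) (compress idx lab m \<zeta> k) =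
    (\<Sum>s\<in>{p \<in> supp \<zeta>. block lab p = k}. \<Sum>r\<in>{p \<in> supp \<xi>. block lab p = k}.
       F (idx (fst s)) (idx (fst r)) (gmul (snd s) (ginv al (snd r))) * \<xi> (fst r) (snd r) * cnj (\<zeta> (fst s) (snd s)))"
  unfolding coeff_eq_sum_superset[OF finite_block_supp[OF \<zeta>] supp_compress_subset[OF \<zeta>]
      finite_block_supp[OF \<xi>] supp_compress_subset[OF \<xi>]]
  by (simp add: sum.reindex[OF inj_on_apfst_block[OF \<zeta>]] sum.reindex[OF inj_on_apfst_block[OF \<xi>]]
      split_def compress_apfst[OF \<xi>] compress_apfst[OF \<zeta>])

lemma coeff_amplify_eq_sum_compress:
  assumes \<xi>: "\<xi> \<in> unit_vecs D m y" and \<zeta>: "\<zeta> \<in> unit_vecs D m y"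
  shows "coeff al (amplify idx lab F) \<xi> \<zeta> =
    (\<Sum>k\<in>block lab ` (supp \<zeta> \<union> supp \<xi>). coeff al F (compress idx lab m \<xi> k) (compress idx lab m \<zeta> k))"
proof -
  let ?R = "supp \<xi>" and ?S = "supp \<zeta>"
  have fin: "finite ?R" "finite ?S" using \<xi> \<zeta> unfolding unit_vecs_iff by auto
  define X where "X s r = F (idx (fst s)) (idx (fst r)) (gmul (snd s) (ginv al (snd r))) *
    \<xi> (fst r) (snd r) * cnj (\<zeta> (fst s) (snd s))" for s r
  have slice_iff: "snd (gmul (snd s) (ginv al (snd r))) = lab (fst s) + - lab (fst r) \<longleftrightarrow>
      block lab s = block lab r" for s r :: "nat \<times> ('a \<times> 'g)"
    unfolding gmul_def ginv_def block_def snd_conv fst_conv by (rule add_minus_eq_add_minus_iff)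
  have "coeff al (amplify idx lab F) \<xi> \<zeta> = (\<Sum>s\<in>?S. \<Sum>r\<in>?R. if block lab s = block lab r then X s r else 0)"
    unfolding coeff_eq_sum_supp split_def amplify_def slice_def X_def slice_iff by (intro sum.cong refl) simp
  also have "\<dots> = (\<Sum>k\<in>block lab ` (?S \<union> ?R). \<Sum>s\<in>{s\<in>?S. block lab s = k}. \<Sum>r\<in>{r\<in>?R. block lab r = k}. X s r)"
    using fin by (intro sum_sum_if_eq_group) auto
  finally show ?thesis
    unfolding X_def by (simp add: coeff_compress[OF \<xi> \<zeta>])
qed

lemma norm_coeff_amplify_le:
  assumes M: "matnorm D al n F < \<top>" and \<xi>: "\<xi> \<in> unit_vecs D m y" and \<zeta>: "\<zeta> \<in> unit_vecs D m y"
  shows "cmod (coeff al (amplify idx lab F) \<xi> \<zeta>) \<le> enn2real (matnorm D al n F)"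
proof -
  define M where "M = enn2real (matnorm D al n F)"
  define K where "K = block lab ` (supp \<zeta> \<union> supp \<xi>)"
  have K: "finite K" using \<xi> \<zeta> unfolding K_def unit_vecs_iff by auto
  have sub: "block lab ` supp \<xi> \<subseteq> K" "block lab ` supp \<zeta> \<subseteq> K" unfolding K_def by auto
  let ?c = "\<lambda>w k. compress idx lab m w k"
  have each: "cmod (coeff al F (?c \<xi> k) (?c \<zeta> k)) \<le> M / 2 * (sqnorm (?c \<xi> k) + sqnorm (?c \<zeta> k))" for k
  proof -
    have "cmod (coeff al F (?c \<xi> k) (?c \<zeta> k)) \<le> M * sqrt (sqnorm (?c \<xi> k)) * sqrt (sqnorm (?c \<zeta> k))"
      unfolding M_def using compress_vector[OF \<xi>] compress_vector[OF \<zeta>] M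
      by (intro norm_coeff_le_matnorm_sqnorm[where D = D and y = y]) auto
    also have "\<dots> \<le> M / 2 * (sqnorm (?c \<xi> k) + sqnorm (?c \<zeta> k))"
      using arith_geo_mean_sqrt[OF sqnorm_nonneg sqnorm_nonneg, of "?c \<xi> k" "?c \<zeta> k"]
      by (simp add: M_def real_sqrt_mult mult.assoc mult_left_mono)
    finally show ?thesis .
  qed
  have "cmod (coeff al (amplify idx lab F) \<xi> \<zeta>) \<le> (\<Sum>k\<in>K. cmod (coeff al F (?c \<xi> k) (?c \<zeta> k)))"
    unfolding coeff_amplify_eq_sum_compress[OF \<xi> \<zeta>] K_def by (rule norm_sum)
  also have "\<dots> \<le> (\<Sum>k\<in>K. M / 2 * (sqnorm (?c \<xi> k) + sqnorm (?c \<zeta> k)))"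
    by (intro sum_mono each)
  also have "\<dots> = M / 2 * (\<Sum>k\<in>K. sqnorm (?c \<xi> k)) + M / 2 * (\<Sum>k\<in>K. sqnorm (?c \<zeta> k))"
    by (simp only: distrib_left sum.distrib sum_distrib_left)
  also have "\<dots> = M / 2 * (sqnorm \<xi> + sqnorm \<zeta>)"
    using sum_sqnorm_compress[OF \<xi> K sub(1)] sum_sqnorm_compress[OF \<zeta> K sub(2)]
    by (simp add: distrib_left)
  also have "\<dots> \<le> M"
    using \<xi> \<zeta> mult_left_mono[of "sqnorm \<xi> + sqnorm \<zeta>" 2 "M / 2"] unfolding unit_vecs_iff
    by (simp add: M_def)
  finally show ?thesis unfolding M_def .
qed

lemma matnorm_amplify_le: "matnorm D al m (amplify idx lab F) \<le> matnorm D al n F"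
proof (cases "matnorm D al n F < \<top>")
  case True
  then have "matnorm D al m (amplify idx lab F) \<le> ennreal (enn2real (matnorm D al n F))"
    by (intro matnorm_leI norm_coeff_amplify_le)
  then show ?thesis using True by (simp add: ennreal_enn2real_if split: if_splits)
qed (simp add: less_top[symmetric])

end

text \<open>Lifting spreads a vector over one row per pair (row, fibre label), so that every entry of the
  amplification meets a single slice.\<close>

definition lift :: "(nat \<Rightarrow> nat \<times> 'g) \<Rightarrow> nat \<Rightarrow> 'a \<Rightarrow> (nat \<Rightarrow> 'a \<times> 'g \<Rightarrow> complex) \<Rightarrow>
    nat \<Rightarrow> 'a \<times> 'g \<Rightarrow> complex" where
  "lift h m x w = (\<lambda>a \<eta>. if a < m \<and> \<eta> = (x, snd (h a)) then w (fst (h a)) \<eta> else 0)"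

lemma bij_betw_Times_fst_less:
  assumes "bij_betw h {..<m} ({..<n} \<times> P)" "a < m"
  shows "fst (h a) < n"
proof -
  have "h a \<in> {..<n} \<times> P" using bij_betwE[OF assms(1)] assms(2) by blast
  then show ?thesis by (simp add: mem_Times_iff)
qed

lemma supp_lift:
  assumes "p \<in> supp (lift h m x w)"
  shows "fst p < m \<and> snd p = (x, snd (h (fst p))) \<and> lift h m x w (fst p) (snd p) = w (fst (h (fst p))) (snd p)"
  using assms by (auto simp: supp_def lift_def split: if_splits)

context
  fixes h :: "nat \<Rightarrow> nat \<times> 'g::group_add" and m n :: nat and P :: "'g set"
    and D :: "'g \<Rightarrow> 'a::topological_space set" and x :: 'a and w :: "nat \<Rightarrow> 'a \<times> 'g \<Rightarrow> complex"
  assumes h: "bij_betw h {..<m} ({..<n} \<times> P)"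
    and w: "w \<in> unit_vecs D n x" and labels: "snd ` snd ` supp w \<subseteq> P"
begin

lemma bij_betw_supp_lift: "bij_betw (apfst (\<lambda>a. fst (h a))) (supp (lift h m x w)) (supp w)"
proof (rule bij_betw_imageI)
  show "inj_on (apfst (\<lambda>a. fst (h a))) (supp (lift h m x w))"
  proof (rule inj_onI)
    fix p q assume p: "p \<in> supp (lift h m x w)" and q: "q \<in> supp (lift h m x w)"
      and eq: "apfst (\<lambda>a. fst (h a)) p = apfst (\<lambda>a. fst (h a)) q"
    have "h (fst p) = h (fst q)" "snd p = snd q"
      using eq supp_lift[OF p] supp_lift[OF q] by (auto simp: apfst_def map_prod_def split_def prod_eq_iff)
    moreover have "fst p < m" "fst q < m" using supp_lift[OF p] supp_lift[OF q] by auto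
    ultimately show "p = q" using h unfolding bij_betw_def inj_on_def by (auto simp: prod_eq_iff)
  qed
  show "apfst (\<lambda>a. fst (h a)) ` supp (lift h m x w) = supp w"
  proof
    show "apfst (\<lambda>a. fst (h a)) ` supp (lift h m x w) \<subseteq> supp w"
    proof
      fix q assume "q \<in> apfst (\<lambda>a. fst (h a)) ` supp (lift h m x w)"
      then obtain p where p: "p \<in> supp (lift h m x w)" and q: "q = apfst (\<lambda>a. fst (h a)) p"
        by blast
      have "lift h m x w (fst p) (snd p) \<noteq> 0" using p by (simp add: supp_def split_def)
      moreover have "lift h m x w (fst p) (snd p) = w (fst (h (fst p))) (snd p)"
        using supp_lift[OF p] by blast
      ultimately have "w (fst (h (fst p))) (snd p) \<noteq> 0" by simp
      then show "q \<in> supp w" using q by (cases p) (simp add: supp_def)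
    qed
    show "supp w \<subseteq> apfst (\<lambda>a. fst (h a)) ` supp (lift h m x w)"
    proof
      fix q assume q: "q \<in> supp w"
      obtain i \<eta> where qi: "q = (i, \<eta>)" by (cases q)
      have i: "i < n" and \<eta>: "\<eta> = (x, snd \<eta>)"
        using supp_unit_vecs[OF w q] qi by (auto simp: fibre_def)
      have "snd \<eta> \<in> P" using labels q qi by force
      then obtain a where a: "a < m" and ha: "h a = (i, snd \<eta>)"
        using h i unfolding bij_betw_def by (metis (no_types, lifting) SigmaI imageE lessThan_iff)
      have "(a, \<eta>) \<in> supp (lift h m x w)"
        using q qi a ha \<eta> by (simp add: supp_def lift_def)
      moreover have "q = apfst (\<lambda>a. fst (h a)) (a, \<eta>)" using qi ha by simp
      ultimately show "q \<in> apfst (\<lambda>a. fst (h a)) ` supp (lift h m x w)" by blast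
    qed
  qed
qed

lemma lift_unit_vecs: "lift h m x w \<in> unit_vecs D m x"
proof -
  have "finite (supp (lift h m x w))"
    using bij_betw_finite[OF bij_betw_supp_lift] w unfolding unit_vecs_iff by blast
  moreover have "\<forall>a \<eta>. lift h m x w a \<eta> \<noteq> 0 \<longrightarrow> a < m \<and> \<eta> \<in> fibre D x"
    using w unfolding unit_vecs_iff by (auto simp: lift_def split: if_splits)
  moreover have "sqnorm (lift h m x w) = (\<Sum>p\<in>supp (lift h m x w).
      (\<lambda>q. (cmod (w (fst q) (snd q)))\<^sup>2) (apfst (\<lambda>a. fst (h a)) p))"
  proof -
    have "lift h m x w (fst p) (snd p) = w (fst (h (fst p))) (snd p)" if "p \<in> supp (lift h m x w)" for p
      using supp_lift[OF that] by blast
    then show ?thesis unfolding sqnorm_def split_def by (intro sum.cong) auto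
  qed
  moreover have "\<dots> = sqnorm w"
    unfolding sqnorm_def split_def by (rule sum.reindex_bij_betw[OF bij_betw_supp_lift])
  ultimately show ?thesis using w unfolding unit_vecs_iff by simp
qed

end

lemma T_slice_eq_phiT_mult:
  fixes D :: "'g::group_add \<Rightarrow> 'a::t2_space set"
  assumes pa: "partial_action D al" and cpt: "\<forall>t. compact (D t)" and T: "bounded_Alinear D al T"
    and f: "f \<in> Cr D al" and z: "z \<in> D (- s)"
  shows "T (slice s f) (z, s) = phiT D al T (z, s) * f (z, s)"
proof -
  have "T (ract (chi D s) (slice_fun D s f)) = ract (T (chi D s)) (slice_fun D s f)"
    using T Cc_imp_Cr[OF chi_Cc[OF cpt]] slice_fun_C0[OF pa cpt f] unfolding bounded_Alinear_def by blast
  then show ?thesis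
    using z by (simp add: slice_eq_ract_chi[OF f] ract_def slice_fun_def phiT_eq_T_chi[OF pa z])
qed

lemma coeff_T_amplify_lift:
  fixes D :: "'g::group_add \<Rightarrow> 'a::t2_space set"
  assumes pa: "partial_action D al" and cpt: "\<forall>t. compact (D t)" and T: "bounded_Alinear D al T"
    and h: "bij_betw h {..<m} ({..<n} \<times> P)" and F: "\<forall>i<n. \<forall>j<n. F i j \<in> Cr D al"
    and \<xi>: "\<xi> \<in> unit_vecs D n x" and \<zeta>: "\<zeta> \<in> unit_vecs D n x"
    and labels: "snd ` snd ` supp \<xi> \<subseteq> P" "snd ` snd ` supp \<zeta> \<subseteq> P"
  shows "coeff al (\<lambda>a b. T (amplify (\<lambda>a. fst (h a)) (\<lambda>a. snd (h a)) F a b)) (lift h m x \<xi>) (lift h m x \<zeta>) =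
    coeff al (\<lambda>i j \<gamma>. phiT D al T \<gamma> * F i j \<gamma>) \<xi> \<zeta>"
proof -
  let ?e = "apfst (\<lambda>a. fst (h a))"
  define \<Phi> where "\<Phi> s r = phiT D al T (gmul (snd s) (ginv al (snd r))) * F (fst s) (fst r) (gmul (snd s) (ginv al (snd r))) *
      \<xi> (fst r) (snd r) * cnj (\<zeta> (fst s) (snd s))" for s r :: "nat \<times> ('a \<times> 'g)"
  have entry: "T (amplify (\<lambda>a. fst (h a)) (\<lambda>a. snd (h a)) F (fst s) (fst r)) (gmul (snd s) (ginv al (snd r)))
      * lift h m x \<xi> (fst r) (snd r) * cnj (lift h m x \<zeta> (fst s) (snd s)) = \<Phi> (?e s) (?e r)"
    if s: "s \<in> supp (lift h m x \<zeta>)" and r: "r \<in> supp (lift h m x \<xi>)" for s r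
  proof -
    let ?p = "snd (h (fst s))" and ?q = "snd (h (fst r))"
    have xs: "x \<in> D (- ?p)" and xr: "x \<in> D (- ?q)"
      using supp_unit_vecs[OF lift_unit_vecs[OF h \<zeta> labels(2)] s]
        supp_unit_vecs[OF lift_unit_vecs[OF h \<xi> labels(1)] r] supp_lift[OF s] supp_lift[OF r]
      by (auto simp: fibre_def)
    have "fst (h (fst s)) < n" "fst (h (fst r)) < n"
      using supp_lift[OF s] supp_lift[OF r] bij_betw_Times_fst_less[OF h] by auto
    then have Fsr: "F (fst (h (fst s))) (fst (h (fst r))) \<in> Cr D al" using F by blast
    have ls: "lift h m x \<zeta> (fst s) (snd s) = \<zeta> (fst (h (fst s))) (snd s)"
      and lr: "lift h m x \<xi> (fst r) (snd r) = \<xi> (fst (h (fst r))) (snd r)"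
      and gs: "snd s = (x, ?p)" and gr: "snd r = (x, ?q)"
      using supp_lift[OF s] supp_lift[OF r] by blast+
    show ?thesis
      unfolding ls lr using T_slice_eq_phiT_mult[OF pa cpt T Fsr partial_action_mem_dom_diff[OF pa xs xr]]
      by (simp add: amplify_def \<Phi>_def gs gr gmul_ginv_Pair)
  qed
  have "coeff al (\<lambda>a b. T (amplify (\<lambda>a. fst (h a)) (\<lambda>a. snd (h a)) F a b)) (lift h m x \<xi>) (lift h m x \<zeta>) =
      (\<Sum>s\<in>supp (lift h m x \<zeta>). \<Sum>r\<in>supp (lift h m x \<xi>). \<Phi> (?e s) (?e r))"
    unfolding coeff_eq_sum_supp split_def using entry by (intro sum.cong) auto
  also have "\<dots> = (\<Sum>s\<in>supp \<zeta>. \<Sum>r\<in>supp (lift h m x \<xi>). \<Phi> s (?e r))"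
    by (rule sum.reindex_bij_betw[OF bij_betw_supp_lift[OF h \<zeta> labels(2)]])
  also have "\<dots> = (\<Sum>s\<in>supp \<zeta>. \<Sum>r\<in>supp \<xi>. \<Phi> s r)"
    by (intro sum.cong refl sum.reindex_bij_betw[OF bij_betw_supp_lift[OF h \<xi> labels(1)]])
  also have "\<dots> = coeff al (\<lambda>i j \<gamma>. phiT D al T \<gamma> * F i j \<gamma>) \<xi> \<zeta>"
    unfolding coeff_eq_sum_supp split_def \<Phi>_def by simp
  finally show ?thesis .
qed

lemma norm_coeff_phiT_mult_le_cbnorm:
  fixes D :: "'g::group_add \<Rightarrow> 'a::t2_space set"
  assumes pa: "partial_action D al" and cpt: "\<forall>t. compact (D t)" and T: "bounded_Alinear D al T"
    and F: "\<forall>i<n. \<forall>j<n. F i j \<in> Cr D al" and F1: "matnorm D al n F \<le> 1"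
    and \<xi>: "\<xi> \<in> unit_vecs D n x" and \<zeta>: "\<zeta> \<in> unit_vecs D n x"
  shows "ennreal (cmod (coeff al (\<lambda>i j \<gamma>. phiT D al T \<gamma> * F i j \<gamma>) \<xi> \<zeta>)) \<le> cbnorm D al T"
proof -
  define P where "P = snd ` snd ` (supp \<xi> \<union> supp \<zeta>)"
  have "finite ({..<n} \<times> P)" using \<xi> \<zeta> unfolding P_def unit_vecs_iff by simp
  then obtain h where h0: "bij_betw h {0..<card ({..<n} \<times> P)} ({..<n} \<times> P)"
    using ex_bij_betw_nat_finite by blast
  define m where "m = card ({..<n} \<times> P)"
  have h: "bij_betw h {..<m} ({..<n} \<times> P)" using h0 by (simp add: m_def atLeast0LessThan)
  define F' where "F' = amplify (\<lambda>a. fst (h a)) (\<lambda>a. snd (h a)) F"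
  have idx_less: "fst (h a) < n" if "a < m" for a
    using bij_betw_Times_fst_less[OF h that] .
  have inj: "inj_on (\<lambda>a. (fst (h a), snd (h a))) {..<m}"
    unfolding prod.collapse by (rule bij_betw_imp_inj_on[OF h])
  have "F' a b \<in> Cr D al" if "a < m" "b < m" for a b
    unfolding F'_def amplify_def
    by (rule Cc_imp_Cr[OF slice_Cc[OF pa cpt]]) (use F idx_less that in blast)
  moreover have "matnorm D al m F' \<le> 1"
    unfolding F'_def using matnorm_amplify_le[OF idx_less inj] F1 by (rule order_trans)
  ultimately have admissible: "F' \<in> {F. (\<forall>i<m. \<forall>j<m. F i j \<in> Cr D al) \<and> matnorm D al m F \<le> 1}"
    by blast
  have labels: "snd ` snd ` supp \<xi> \<subseteq> P" "snd ` snd ` supp \<zeta> \<subseteq> P" unfolding P_def by auto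
  have "ennreal (cmod (coeff al (\<lambda>i j \<gamma>. phiT D al T \<gamma> * F i j \<gamma>) \<xi> \<zeta>)) =
      ennreal (cmod (coeff al (\<lambda>a b. T (F' a b)) (lift h m x \<xi>) (lift h m x \<zeta>)))"
    unfolding F'_def coeff_T_amplify_lift[OF pa cpt T h F \<xi> \<zeta> labels] ..
  also have "\<dots> \<le> matnorm D al m (\<lambda>a b. T (F' a b))"
    by (rule coeff_le_matnorm[OF lift_unit_vecs[OF h \<xi> labels(1)] lift_unit_vecs[OF h \<zeta> labels(2)]])
  also have "\<dots> \<le> cbnorm D al T"
    unfolding cbnorm_def by (rule SUP_upper2[OF UNIV_I], rule SUP_upper[OF admissible])
  finally show ?thesis .
qed

lemma M0A_norm_phiT_le_cbnorm:
  fixes D :: "'g::group_add \<Rightarrow> 'a::t2_space set"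
  assumes pa: "partial_action D al" and cpt: "\<forall>t. compact (D t)" and T: "bounded_Alinear D al T"
  shows "M0A_norm D al (phiT D al T) \<le> cbnorm D al T"
  unfolding M0A_norm_def cbnorm_def[of D al "\<lambda>f \<gamma>. phiT D al T \<gamma> * f \<gamma>"]
proof (intro SUP_least)
  fix n F assume "F \<in> {F. (\<forall>i<n. \<forall>j<n. F i j \<in> Cr D al) \<and> matnorm D al n F \<le> 1}"
  then show "matnorm D al n (\<lambda>i j \<gamma>. phiT D al T \<gamma> * F i j \<gamma>) \<le> cbnorm D al T"
    unfolding matnorm_def[of D al n "\<lambda>i j \<gamma>. phiT D al T \<gamma> * F i j \<gamma>"]
    using norm_coeff_phiT_mult_le_cbnorm[OF pa cpt T] by (intro SUP_least) auto
qed

theorem mainTheorem11: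
  fixes D :: "'g::group_add \<Rightarrow> 'a::t2_space set"
    and al :: "'g \<Rightarrow> 'a \<Rightarrow> 'a"
    and \<mu> :: "'a measure"
    and T :: "('a \<times> 'g \<Rightarrow> complex) \<Rightarrow> ('a \<times> 'g \<Rightarrow> complex)"
  assumes lc: "locally_compact_space (euclidean :: 'a topology)"
    and pa: "partial_action D al"
    and cpt: "\<forall>t. compact (D t)"
    and meas: "qi_full_prob D al \<mu>"
    and T: "bounded_Alinear D al T"
  shows "(Cb D (phiT D al T) \<and> (SUP \<gamma>\<in>grpd D. cmod (phiT D al T \<gamma>)) \<le> opnorm D al T) \<and>
         (finite_Arank D al T \<and> (\<forall>f\<in>Cr D al. in_span_A_chi D (T f)) \<longrightarrow>
           Cc D (phiT D al T) \<and> M0A_norm D al (phiT D al T) \<le> cbnorm D al T)"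
  using phiT_Cb[OF pa cpt T] phiT_Cc[OF pa cpt T] M0A_norm_phiT_le_cbnorm[OF pa cpt T] by blast

end
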